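(* Let $f_0,f_1:X\to\mathbb{R}$ be Morse functions, $\{m^0_{x,y}\}_{x,y\in\mathrm{Crit}(f_0)}$ and $\{m^1_{x',y'}\}_{x',y'\in\mathrm{Crit}(f_1)}$ twisting cocycles, and $\{\tau_{x,y'}\in C_{|x|-|y'|}(\Omega X),\ x\in\mathrm{Crit}(f_0),y'\in\mathrm{Crit}(f_1)\}$ a family satisfying $$\partial\tau_{x,y'}=\sum_{z\in\mathrm{Crit}(f_0)}m^0_{x,z}\cdot\tau_{z,y'}-\sum_{w'\in\mathrm{Crit}(f_1)}(-1)^{|x|-|w'|}\tau_{x,w'}\cdot m^1_{w',y'}.$$ Let $\mathcal{F}$ be an $\mathcal{A}_\infty$-module over $C_*(\Omega X)$. Then $$\Psi=\sum_{n\ge1}\sum_{u=1}^n(-1)^{u-1}(\nu_{n+1}\otimes1)\tilde{\mathbf m}_{(1)}^{n-u}\tilde{\boldsymbol\tau}\tilde{\mathbf m}_{(0)}^{u-1}:C_*(X,m^0,\mathcal{F})\to C_*(X,m^1,\mathcal{F})$$ is a morphism of complexes.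
   Context: $C_*(\Omega X)$: cubical chains on Moore based loops, an $\mathcal{A}_\infty$-algebra with $\mu_1$ the differential, $\mu_2$ the Pontryagin product, $\mu_i=0$ for $i\ge3$; Koszul sign rule throughout. A twisting cocycle $\{m_{x,y}\in C_{|x|-|y|-1}(\Omega X)\}$ satisfies $\partial m_{x,y}=\sum_z(-1)^{|x|-|z|}m_{x,z}m_{z,y}$. An $\mathcal{A}_\infty$-module $(\mathcal{F},\nu_n)$: maps $\nu_n:\mathcal{F}\otimes C_*(\Omega X)^{\otimes n-1}\to\mathcal{F}$ of degree $n-2$ with $\sum_{s+t=N,s\ge1}(-1)^{st}\nu_{t+1}(\nu_s\otimes1^{\otimes t})+\sum_{r+s+t=N,r,s\ge1}(-1)^{r+st}\nu_{r+t+1}(1^{\otimes r}\otimes\mu_s\otimes1^{\otimes t})=0$ for all $N\ge1$. For $i=0,1$, $\mathbf m_{(i)}(x)=\sum_y m^i_{x,y}\otimes y$ and $\tilde{\mathbf m}_{(i)}(\alpha\otimes\gamma_1\otimes\cdots\otimes\gamma_k\otimes x)=(1^{\otimes k+1}\otimes\mathbf m_{(i)})(\dots)$ on $\mathcal{F}\otimes TC_*(\Omega X)\otimes\mathbb{Z}\mathrm{Crit}(f_i)$; similarly $\boldsymbol\tau(x)=\sum_{y'}\tau_{x,y'}\otimes y'$ and $\tilde{\boldsymbol\tau}=1^{\otimes k+1}\otimes\boldsymbol\tau$ (degree $0$) from $\mathcal{F}\otimes TC_*(\Omega X)\otimes\mathbb{Z}\mathrm{Crit}(f_0)$ to $\mathcal{F}\otimes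 TC_*(\Omega X)\otimes\mathbb{Z}\mathrm{Crit}(f_1)$. $C_*(X,m^i,\mathcal{F})=\mathcal{F}\otimes\mathbb{Z}\mathrm{Crit}(f_i)$ with differential $\sum_{n\ge0}(\nu_{n+1}\otimes1)\tilde{\mathbf m}_{(i)}^n$. *)

theory Defs
  imports Main "HOL-Library.Groups_Big_Fun"
begin

(* ---------------------------------------------------------------------
   Conventions.
   * Graded abelian groups: a type 'g :: ab_group_add together with a
     homogeneity predicate H :: int => 'g => bool  (H d a  =  "a is
     homogeneous of degree d").
   * C_*(Omega X) is modelled abstractly as a graded abelian group A
     (predicate Ah) with mu_1 = dA (differential) and mu_2 = mA
     (product), mu_i = 0 for i >= 3, non-negatively graded.
   * Crit(f_i) is a finite set C_i with Morse index ind_i.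
   * Koszul sign rule: (f (x) g)(a (x) b) = (-1)^(|g||a|) f a (x) g b.
   --------------------------------------------------------------------- *)

definition ksign :: "int \<Rightarrow> int" where
  "ksign k = (if even k then 1 else -1)"

definition zsgn :: "int \<Rightarrow> 'a::ab_group_add \<Rightarrow> 'a" where
  "zsgn k a = (if even k then a else - a)"

definition zmul :: "int \<Rightarrow> 'a::ab_group_add \<Rightarrow> 'a" where
  "zmul k a = (if 0 \<le> k then (\<Sum>i<nat k. a) else - (\<Sum>i<nat (- k). a))"

definition graded_group :: "(int \<Rightarrow> 'a::ab_group_add \<Rightarrow> bool) \<Rightarrow> bool" where
  "graded_group H \<longleftrightarrow> (\<forall>d. H d 0 \<and> (\<forall>a b. H d a \<longrightarrow> H d b \<longrightarrow> H d (a + b))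
                         \<and> (\<forall>a. H d a \<longrightarrow> H d (- a)))"

definition cubical_dga ::
  "(int \<Rightarrow> 'a::ab_group_add \<Rightarrow> bool) \<Rightarrow> ('a \<Rightarrow> 'a) \<Rightarrow> ('a \<Rightarrow> 'a \<Rightarrow> 'a) \<Rightarrow> bool" where
  "cubical_dga Ah dA mA \<longleftrightarrow>
     graded_group Ah
   \<and> (\<forall>d a. Ah d a \<and> d < 0 \<longrightarrow> a = 0)
   \<and> (\<forall>a b. dA (a + b) = dA a + dA b)
   \<and> (\<forall>d a. Ah d a \<longrightarrow> Ah (d - 1) (dA a))
   \<and> (\<forall>a b c. mA (a + b) c = mA a c + mA b c)
   \<and> (\<forall>a b c. mA a (b + c) = mA a b + mA a c)
   \<and> (\<forall>d e a b. Ah d a \<longrightarrow> Ah e b \<longrightarrow> Ah (d + e) (mA a b))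
   \<and> (\<forall>a. dA (dA a) = 0)
   \<and> (\<forall>d a b. Ah d a \<longrightarrow> dA (mA a b) = mA (dA a) b + zsgn d (mA a (dA b)))
   \<and> (\<forall>a b c. mA (mA a b) c = mA a (mA b c))"

definition muA :: "('a::ab_group_add \<Rightarrow> 'a) \<Rightarrow> ('a \<Rightarrow> 'a \<Rightarrow> 'a) \<Rightarrow> nat \<Rightarrow> 'a list \<Rightarrow> 'a" where
  "muA dA mA s gs = (if s = 1 then dA (gs ! 0) else if s = 2 then mA (gs ! 0) (gs ! 1) else 0)"

(* Left-hand side of the A_infinity module relation for N, evaluated on
   alpha (x) gamma_1 (x) ... (x) gamma_{N-1}, alpha of degree p, gamma_i of
   degree fst (gs ! (i-1)); nu n : F (x) A^(n-1) -> F. *)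
definition ainf_mod_lhs ::
  "('a::ab_group_add \<Rightarrow> 'a) \<Rightarrow> ('a \<Rightarrow> 'a \<Rightarrow> 'a) \<Rightarrow> (nat \<Rightarrow> 'f::ab_group_add \<Rightarrow> 'a list \<Rightarrow> 'f)
     \<Rightarrow> nat \<Rightarrow> int \<Rightarrow> 'f \<Rightarrow> (int \<times> 'a) list \<Rightarrow> 'f" where
  "ainf_mod_lhs dA mA \<nu> N p \<alpha> gs =
     (\<Sum>s\<in>{1..N}. zsgn (int s * int (N - s))
        (\<nu> (N - s + 1) (\<nu> s \<alpha> (map snd (take (s - 1) gs))) (map snd (drop (s - 1) gs))))
   + (\<Sum>r\<in>{1..N}. \<Sum>s\<in>{1..N}. if r + s \<le> N then
        zsgn (int r + int s * int (N - r - s))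
          (zsgn ((int s - 2) * (p + sum_list (map fst (take (r - 1) gs))))
            (\<nu> (N - s + 1) \<alpha>
               (map snd (take (r - 1) gs) @ [muA dA mA s (map snd (take s (drop (r - 1) gs)))]
                 @ map snd (drop (r - 1 + s) gs))))
      else 0)"

definition ainf_module ::
  "(int \<Rightarrow> 'a::ab_group_add \<Rightarrow> bool) \<Rightarrow> ('a \<Rightarrow> 'a) \<Rightarrow> ('a \<Rightarrow> 'a \<Rightarrow> 'a)
     \<Rightarrow> (int \<Rightarrow> 'f::ab_group_add \<Rightarrow> bool) \<Rightarrow> (nat \<Rightarrow> 'f \<Rightarrow> 'a list \<Rightarrow> 'f) \<Rightarrow> bool" where
  "ainf_module Ah dA mA Fh \<nu> \<longleftrightarrow>
     graded_group Fh
   \<and> (\<forall>n \<alpha> \<beta> gs. \<nu> n (\<alpha> + \<beta>) gs = \<nu> n \<alpha> gs + \<nu> n \<beta> gs)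
   \<and> (\<forall>n \<alpha> gs hs a b. \<nu> n \<alpha> (gs @ (a + b) # hs) = \<nu> n \<alpha> (gs @ a # hs) + \<nu> n \<alpha> (gs @ b # hs))
   \<and> (\<forall>n p \<alpha> gs. 1 \<le> n \<longrightarrow> length gs = n - 1 \<longrightarrow> Fh p \<alpha> \<longrightarrow> list_all (\<lambda>(d, a). Ah d a) gs
        \<longrightarrow> Fh (p + sum_list (map fst gs) + int n - 2) (\<nu> n \<alpha> (map snd gs)))
   \<and> (\<forall>N p \<alpha> gs. 1 \<le> N \<longrightarrow> length gs = N - 1 \<longrightarrow> Fh p \<alpha> \<longrightarrow> list_all (\<lambda>(d, a). Ah d a) gs
        \<longrightarrow> ainf_mod_lhs dA mA \<nu> N p \<alpha> gs = 0)"

definition twisting_cocycle ::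
  "(int \<Rightarrow> 'a::ab_group_add \<Rightarrow> bool) \<Rightarrow> ('a \<Rightarrow> 'a) \<Rightarrow> ('a \<Rightarrow> 'a \<Rightarrow> 'a)
     \<Rightarrow> 'x set \<Rightarrow> ('x \<Rightarrow> nat) \<Rightarrow> ('x \<Rightarrow> 'x \<Rightarrow> 'a) \<Rightarrow> bool" where
  "twisting_cocycle Ah dA mA C ind m \<longleftrightarrow>
     (\<forall>x\<in>C. \<forall>y\<in>C. Ah (int (ind x) - int (ind y) - 1) (m x y)
        \<and> dA (m x y) = (\<Sum>z\<in>C. zsgn (int (ind x) - int (ind z)) (mA (m x z) (m z y))))"

(* ---- tensor words  alpha (x) gamma_1 (x) ... (x) gamma_k (x) x, with degrees,
   and formal Z-linear combinations of them (finitely supported functions) ---- *)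
type_synonym ('f, 'a, 'x) tword = "(int \<times> 'f) \<times> (int \<times> 'a) list \<times> 'x"

definition lext :: "('w \<Rightarrow> 'v \<Rightarrow> int) \<Rightarrow> ('w \<Rightarrow> int) \<Rightarrow> 'v \<Rightarrow> int" where
  "lext T s v = Sum_any (\<lambda>w. s w * T w v)"

(* m~ = 1^(k+1) (x) m, of degree -1, with Koszul sign *)
definition mtil :: "'x set \<Rightarrow> ('x \<Rightarrow> nat) \<Rightarrow> ('x \<Rightarrow> 'x \<Rightarrow> 'a)
                     \<Rightarrow> ('f, 'a, 'x) tword \<Rightarrow> ('f, 'a, 'x) tword \<Rightarrow> int" where
  "mtil C ind m w v = (case w of (pa, gs, x) \<Rightarrow>
     (\<Sum>y\<in>C. if v = (pa, gs @ [(int (ind x) - int (ind y) - 1, m x y)], y)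
             then ksign ((-1) * (fst pa + sum_list (map fst gs))) else 0))"

(* tau~ = 1^(k+1) (x) tau, of degree 0 *)
definition tautil :: "'x set \<Rightarrow> ('x \<Rightarrow> nat) \<Rightarrow> ('x \<Rightarrow> nat) \<Rightarrow> ('x \<Rightarrow> 'x \<Rightarrow> 'a)
                     \<Rightarrow> ('f, 'a, 'x) tword \<Rightarrow> ('f, 'a, 'x) tword \<Rightarrow> int" where
  "tautil C1 ind0 ind1 \<tau> w v = (case w of (pa, gs, x) \<Rightarrow>
     (\<Sum>y\<in>C1. if v = (pa, gs @ [(int (ind0 x) - int (ind1 y), \<tau> x y)], y) then 1 else 0))"

(* (nu_{n+1} (x) 1) applied to a formal sum of words with n algebra entries;
   result as an element of F (x) Z Crit: component at crit point y and F-degree q *)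
definition evalnu :: "(nat \<Rightarrow> 'f::ab_group_add \<Rightarrow> 'a list \<Rightarrow> 'f) \<Rightarrow> nat
                       \<Rightarrow> (('f, 'a, 'x) tword \<Rightarrow> int) \<Rightarrow> 'x \<Rightarrow> int \<Rightarrow> 'f" where
  "evalnu \<nu> n s y q = Sum_any (\<lambda>w. case w of ((p, \<alpha>), gs, x) \<Rightarrow>
     if x = y \<and> length gs = n \<and> p + sum_list (map fst gs) + int n - 1 = q
     then zmul (s w) (\<nu> (n + 1) \<alpha> (map snd gs)) else 0)"

(* Elements of C_*(X,m,F) = F (x) Z Crit: c x p is the component in F_p (x) Z x *)
definition cchain :: "'x set \<Rightarrow> (int \<Rightarrow> 'f::ab_group_add \<Rightarrow> bool) \<Rightarrow> ('x \<Rightarrow> int \<Rightarrow> 'f) \<Rightarrow> bool" where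
  "cchain C Fh c \<longleftrightarrow> finite {(x, p). c x p \<noteq> 0} \<and> (\<forall>x p. c x p \<noteq> 0 \<longrightarrow> x \<in> C)
                       \<and> (\<forall>x p. Fh p (c x p))"

definition emb :: "'x set \<Rightarrow> ('x \<Rightarrow> int \<Rightarrow> 'f::ab_group_add) \<Rightarrow> ('f, 'a, 'x) tword \<Rightarrow> int" where
  "emb C c w = (case w of ((p, \<alpha>), gs, x) \<Rightarrow>
     if gs = [] \<and> x \<in> C \<and> \<alpha> = c x p \<and> \<alpha> \<noteq> 0 then 1 else 0)"

(* differential of C_*(X,m,F):  sum_{n>=0} (nu_{n+1} (x) 1) m~^n *)
definition morse_diff :: "'x set \<Rightarrow> ('x \<Rightarrow> nat) \<Rightarrow> ('x \<Rightarrow> 'x \<Rightarrow> 'a)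
     \<Rightarrow> (nat \<Rightarrow> 'f::ab_group_add \<Rightarrow> 'a list \<Rightarrow> 'f) \<Rightarrow> ('x \<Rightarrow> int \<Rightarrow> 'f) \<Rightarrow> 'x \<Rightarrow> int \<Rightarrow> 'f" where
  "morse_diff C ind m \<nu> c y q =
     Sum_any (\<lambda>n. evalnu \<nu> n ((lext (mtil C ind m) ^^ n) (emb C c)) y q)"

definition Psi :: "'x set \<Rightarrow> ('x \<Rightarrow> nat) \<Rightarrow> ('x \<Rightarrow> 'x \<Rightarrow> 'a)
     \<Rightarrow> 'x set \<Rightarrow> ('x \<Rightarrow> nat) \<Rightarrow> ('x \<Rightarrow> 'x \<Rightarrow> 'a) \<Rightarrow> ('x \<Rightarrow> 'x \<Rightarrow> 'a)
     \<Rightarrow> (nat \<Rightarrow> 'f::ab_group_add \<Rightarrow> 'a list \<Rightarrow> 'f) \<Rightarrow> ('x \<Rightarrow> int \<Rightarrow> 'f) \<Rightarrow> 'x \<Rightarrow> int \<Rightarrow> 'f" where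
  "Psi C0 ind0 m0 C1 ind1 m1 \<tau> \<nu> c y q =
     Sum_any (\<lambda>n. if 1 \<le> n then
        (\<Sum>u\<in>{1..n}. zsgn (int u - 1)
           (evalnu \<nu> n ((lext (mtil C1 ind1 m1) ^^ (n - u))
              (lext (tautil C1 ind0 ind1 \<tau>) ((lext (mtil C0 ind0 m0) ^^ (u - 1)) (emb C0 c)))) y q))
      else 0)"

end

theory Submission
  imports Defs
begin

text \<open>\<open>\<Psi>\<close> is the off-diagonal block of the twisted differential of a mapping cone. On
  \<open>Crit(f\<^sub>0) \<squnion> Crit(f\<^sub>1)\<close>, with the indices of \<open>Crit(f\<^sub>0)\<close> raised by one, the matrix
  \<open>[[m\<^sup>0, (-1)\<^sup>|\<^sup>x\<^sup>| \<tau>], [0, m\<^sup>1]]\<close> is again a twisting cocycle; this is exactly the hypothesis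
  on \<open>\<partial>\<tau>\<close>. For any twisting cocycle the differential \<open>\<Sum>\<^sub>n (\<nu>\<^sub>n\<^sub>+\<^sub>1 \<otimes> 1) m\<^sup>~\<^sup>n\<close> is a sum over
  paths of critical points, and it squares to zero: composing two path sums gives, path by path,
  the \<open>\<nu>\<circ>\<nu>\<close> part of the \<open>\<A>\<^sub>\<infinity>\<close>-relation, whose remaining terms insert \<open>dA\<close> into one
  coefficient or multiply two neighbouring ones. Expanding \<open>dA\<close> of a coefficient by the cocycle
  equation turns the \<open>dA\<close>-terms of the paths of length \<open>L\<close> into the negatives of the \<open>mA\<close>-terms of
  the paths of length \<open>L + 1\<close>, so the sum telescopes; paths longer than the index of their start
  vanish for degree reasons. The component of \<open>d\<^sub>c\<^sub>o\<^sub>n\<^sub>e\<^sup>2 = 0\<close> from \<open>Crit(f\<^sub>0)\<close> to \<open>Crit(f\<^sub>1)\<close> is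
  \<open>\<Psi> \<circ> d\<^sub>0 = d\<^sub>1 \<circ> \<Psi>\<close>.\<close>

lemma zsgn_exp_add: "zsgn (a + b) x = zsgn a (zsgn b x)"
  by (auto simp: zsgn_def)

lemma zsgn_cong: "even (a - b) \<Longrightarrow> zsgn a x = zsgn b x"
  unfolding zsgn_def by (metis add_diff_cancel_left' diff_add_cancel even_add)

lemma zsgn_odd: "odd (a - b) \<Longrightarrow> zsgn a x = - zsgn b x"
  by (simp add: zsgn_def)

lemma zsgn_0 [simp]: "zsgn 0 x = x"
  by (simp add: zsgn_def)

lemma zsgn_zero [simp]: "zsgn k 0 = 0"
  by (simp add: zsgn_def)

lemma zsgn_1: "zsgn 1 x = - x"
  by (simp add: zsgn_def)

lemma zsgn_zsgn: "zsgn k (zsgn k x) = x"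
  by (simp add: zsgn_def)

lemma zsgn_add: "zsgn k (x + y) = zsgn k x + zsgn k y"
  by (simp add: zsgn_def)

lemma zsgn_minus: "zsgn k (- x) = - zsgn k x"
  by (simp add: zsgn_def)

lemma zsgn_diff: "zsgn k (x - y) = zsgn k x - zsgn k y"
  by (simp add: zsgn_def)

lemma zsgn_sum: "zsgn k (sum f A) = (\<Sum>i\<in>A. zsgn k (f i))"
  by (simp add: zsgn_def sum_negf)

lemma zsgn_minus_minus: "zsgn (- a - b) x = zsgn (a + b) x"
  by (rule zsgn_cong) (simp add: algebra_simps)

lemma ksign_0 [simp]: "ksign 0 = 1"
  by (simp add: ksign_def)

lemma ksign_add: "ksign (a + b) = ksign a * ksign b"
  by (auto simp: ksign_def)

lemma ksign_minus_minus: "ksign (- a - b) = ksign (a + b)"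
  unfolding ksign_def by (metis add_uminus_conv_diff even_minus minus_add_distrib)

lemma ksign_minus_one_mult: "ksign (- 1 * a) = ksign a"
  by (simp add: ksign_def)

lemma zmul_0 [simp]: "zmul 0 a = 0"
  by (simp add: zmul_def)

lemma zmul_succ: "zmul (k + 1) a = zmul k a + a"
proof (cases "0 \<le> k")
  case True
  then have "nat (k + 1) = Suc (nat k)" by simp
  with True show ?thesis by (simp add: zmul_def add.commute)
next
  case False
  then have "nat (- k) = Suc (nat (- (k + 1)))" by simp
  with False show ?thesis by (cases "k = -1") (auto simp: zmul_def)
qed

lemma zmul_add: "zmul (k + l) a = zmul k a + zmul l a"
proof (induction l rule: int_induct[where k = 0])
  case (step1 i)
  then show ?case using zmul_succ[of "k + i" a] zmul_succ[of i a] by (simp add: add.assoc)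
next
  case (step2 i)
  then show ?case using zmul_succ[of "k + i - 1" a] zmul_succ[of "i - 1" a] by (simp add: algebra_simps)
qed simp

lemma zmul_sum: "finite I \<Longrightarrow> zmul (sum f I) a = (\<Sum>i\<in>I. zmul (f i) a)"
  by (induction I rule: finite_induct) (auto simp: zmul_add)

lemma zmul_ksign: "zmul (ksign e) a = zsgn e a"
  by (simp add: zmul_def ksign_def zsgn_def)

text \<open>The finitely supported integer combination \<open>\<Sum>i\<in>I. k i \<cdot> [w i]\<close>; the function \<open>w\<close>
  need not be injective.\<close>

definition formal_sum :: "'i set \<Rightarrow> ('i \<Rightarrow> int) \<Rightarrow> ('i \<Rightarrow> 'w) \<Rightarrow> 'w \<Rightarrow> int" where
  "formal_sum I k w = (\<lambda>v. \<Sum>i\<in>I. if v = w i then k i else 0)"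

lemma Sum_any_eq_sum_image:
  assumes "finite I" "\<And>u. u \<notin> w ` I \<Longrightarrow> g u = 0"
  shows "Sum_any g = sum g (w ` I)"
  by (rule Sum_any.expand_superset) (use assms in auto)

lemma Sum_any_formal_sum:
  assumes "finite I" "\<And>u. u \<notin> w ` I \<Longrightarrow> g u 0 = 0"
    and "\<And>u. g u (\<Sum>i\<in>I. if u = w i then k i else 0) = (\<Sum>i\<in>I. if u = w i then g (w i) (k i) else 0)"
  shows "Sum_any (\<lambda>u. g u (formal_sum I k w u)) = (\<Sum>i\<in>I. g (w i) (k i))"
proof -
  have "Sum_any (\<lambda>u. g u (formal_sum I k w u)) = (\<Sum>u\<in>w ` I. \<Sum>i\<in>I. if u = w i then g (w i) (k i) else 0)"
    unfolding formal_sum_def assms(3)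
    by (rule Sum_any_eq_sum_image) (use assms(1) in \<open>auto intro!: sum.neutral\<close>)
  also have "\<dots> = (\<Sum>i\<in>I. g (w i) (k i))"
    by (subst sum.swap) (simp add: sum.delta[OF finite_imageI] assms(1))
  finally show ?thesis .
qed

lemma lext_formal_sum:
  assumes "finite I"
  shows "lext T (formal_sum I k w) v = (\<Sum>i\<in>I. k i * T (w i) v)"
  unfolding lext_def
  by (rule Sum_any_formal_sum[where g = "\<lambda>u s. s * T u v"]) (auto simp: assms sum_distrib_right intro!: sum.cong)

lemma formal_sum_reindex:
  assumes "bij_betw h J I"
  shows "formal_sum I k w = formal_sum J (k \<circ> h) (w \<circ> h)"
  unfolding formal_sum_def comp_def by (intro ext) (rule sum.reindex_bij_betw[OF assms, symmetric])

lemma formal_sum_cong: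
  assumes "\<And>i. i \<in> I \<Longrightarrow> k i = k' i" "\<And>i. i \<in> I \<Longrightarrow> w i = w' i"
  shows "formal_sum I k w = formal_sum I k' w'"
  unfolding formal_sum_def using assms by (intro ext sum.cong) auto

lemma lext_formal_sum_extend:
  assumes "finite I" "finite C"
    and "\<And>w'. T w' = formal_sum C (\<lambda>y. s w') (\<lambda>y. e w' y)"
  shows "lext T (formal_sum I k w) = formal_sum (I \<times> C) (\<lambda>(i, y). k i * s (w i)) (\<lambda>(i, y). e (w i) y)"
proof
  fix v
  have "lext T (formal_sum I k w) v = (\<Sum>i\<in>I. k i * (\<Sum>y\<in>C. if v = e (w i) y then s (w i) else 0))"
    by (simp only: lext_formal_sum[OF assms(1)] assms(3)) (simp add: formal_sum_def)
  also have "\<dots> = (\<Sum>i\<in>I. \<Sum>y\<in>C. if v = e (w i) y then k i * s (w i) else 0)"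
    by (simp add: sum_distrib_left if_distrib cong: if_cong)
  also have "\<dots> = formal_sum (I \<times> C) (\<lambda>(i, y). k i * s (w i)) (\<lambda>(i, y). e (w i) y) v"
    unfolding formal_sum_def by (simp add: sum.cartesian_product) (rule sum.cong; auto)
  finally show "lext T (formal_sum I k w) v = \<dots>" .
qed

section \<open>Paths of critical points\<close>

text \<open>A path \<open>x \<rightarrow> z\<^sub>1 \<rightarrow> \<dots> \<rightarrow> z\<^sub>n\<close> is stored as the start \<open>x\<close> and the list \<open>[z\<^sub>1, \<dots>, z\<^sub>n]\<close>;
  its entries are the graded coefficients \<open>M x z\<^sub>1, M z\<^sub>1 z\<^sub>2, \<dots>\<close> that \<open>m\<^sup>~\<^sup>n\<close> appends to a word.\<close>

definition entry :: "('x \<Rightarrow> nat) \<Rightarrow> ('x \<Rightarrow> 'x \<Rightarrow> 'a) \<Rightarrow> 'x \<Rightarrow> 'x \<Rightarrow> int \<times> 'a" where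
  "entry ind M x z = (int (ind x) - int (ind z) - 1, M x z)"

fun path_entries :: "('x \<Rightarrow> nat) \<Rightarrow> ('x \<Rightarrow> 'x \<Rightarrow> 'a) \<Rightarrow> 'x \<Rightarrow> 'x list \<Rightarrow> (int \<times> 'a) list" where
  "path_entries ind M x [] = []"
| "path_entries ind M x (z # zs) = entry ind M x z # path_entries ind M z zs"

text \<open>The Koszul sign exponent collected by \<open>m\<^sup>~\<^sup>n\<close>: each step contributes the degree of the word
  it extends, starting from degree \<open>d\<close>.\<close>

fun path_sign :: "('x \<Rightarrow> nat) \<Rightarrow> int \<Rightarrow> 'x \<Rightarrow> 'x list \<Rightarrow> int" where
  "path_sign ind d x [] = 0"
| "path_sign ind d x (z # zs) = d + path_sign ind (d + int (ind x) - int (ind z) - 1) z zs"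

definition paths :: "nat \<Rightarrow> 'x set \<Rightarrow> 'x list set" where
  "paths n C = {zs. set zs \<subseteq> C \<and> length zs = n}"

lemma finite_paths [simp]: "finite C \<Longrightarrow> finite (paths n C)"
  unfolding paths_def by (rule finite_lists_length_eq)

lemma paths_0 [simp]: "paths 0 C = {[]}"
  by (auto simp: paths_def)

lemma last_in_path: "x \<in> C \<Longrightarrow> set zs \<subseteq> C \<Longrightarrow> last (x # zs) \<in> C"
  by (metis last_ConsL last_ConsR last_in_set subset_code(1))

lemma length_path_entries [simp]: "length (path_entries ind M x zs) = length zs"
  by (induction zs arbitrary: x) auto

lemma path_entries_append:
  "path_entries ind M x (zs @ ys) = path_entries ind M x zs @ path_entries ind M (last (x # zs)) ys"
  by (induction zs arbitrary: x) auto

lemma path_degree: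
  "sum_list (map fst (path_entries ind M x zs)) = int (ind x) - int (ind (last (x # zs))) - int (length zs)"
  by (induction zs arbitrary: x) (auto simp: entry_def)

lemma path_sign_append:
  "path_sign ind d x (zs @ ys)
   = path_sign ind d x zs + path_sign ind (d + sum_list (map fst (path_entries ind M x zs))) (last (x # zs)) ys"
  by (induction zs arbitrary: x d) (auto simp: entry_def algebra_simps)

lemma path_sign_shift: "path_sign ind (d + c) x zs = path_sign ind d x zs + c * int (length zs)"
proof (induction zs arbitrary: x d)
  case (Cons z zs)
  show ?case using Cons[of "d + int (ind x) - int (ind z) - 1" z] by (simp add: algebra_simps)
qed simp

lemma take_path_entries:
  "n \<le> length P \<Longrightarrow> take n (path_entries ind M x P) = path_entries ind M x (take n P)"
  using path_entries_append[of ind M x "take n P" "drop n P"] by simp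

lemma drop_path_entries:
  "n \<le> length P \<Longrightarrow> drop n (path_entries ind M x P) = path_entries ind M (last (x # take n P)) (drop n P)"
  using path_entries_append[of ind M x "take n P" "drop n P"] by simp

lemma last_take_drop: "last (last (x # take n P) # drop n P) = last (x # P)"
proof -
  have "last (x # P) = last ((x # take n P) @ drop n P)" by simp
  also have "\<dots> = last (last (x # take n P) # drop n P)"
    by (cases "drop n P = []") (auto simp: last_append)
  finally show ?thesis by simp
qed

lemma last_append_Cons: "last (x # P1 @ z # P2) = last (z # P2)"
  by (induction P1 arbitrary: x) auto

lemma sum_paths_Suc: "(\<Sum>zs\<in>paths (Suc n) C. f zs) = (\<Sum>z\<in>C. \<Sum>zs\<in>paths n C. f (z # zs))"
proof -
  have "paths (Suc n) C = (\<lambda>(z, zs). z # zs) ` (C \<times> paths n C)"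
    by (auto simp: paths_def length_Suc_conv image_iff)
  moreover have "inj_on (\<lambda>(z, zs). z # zs) (C \<times> paths n C)" by (auto simp: inj_on_def)
  ultimately show ?thesis by (simp add: sum.reindex sum.cartesian_product split_def)
qed

lemma sum_paths_append:
  "(\<Sum>P\<in>paths (a + b) C. f (take a P) (drop a P)) = (\<Sum>zs\<in>paths a C. \<Sum>zs'\<in>paths b C. f zs zs')"
proof -
  have bij: "bij_betw (\<lambda>(zs, zs'). zs @ zs') (paths a C \<times> paths b C) (paths (a + b) C)"
    by (rule bij_betw_byWitness[where f' = "\<lambda>P. (take a P, drop a P)"])
       (auto simp: paths_def dest: in_set_takeD in_set_dropD)
  have "(\<Sum>P\<in>paths (a + b) C. f (take a P) (drop a P)) = (\<Sum>(zs, zs')\<in>paths a C \<times> paths b C. f zs zs')"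
    by (subst sum.reindex_bij_betw[OF bij, symmetric]) (auto simp: paths_def intro!: sum.cong)
  then show ?thesis by (simp add: sum.cartesian_product)
qed

lemma sum_paths_split:
  assumes "a < L"
  shows "(\<Sum>P\<in>paths L C. f P) = (\<Sum>P1\<in>paths a C. \<Sum>z\<in>C. \<Sum>P2\<in>paths (L - 1 - a) C. f (P1 @ z # P2))"
proof -
  have "L = a + Suc (L - 1 - a)" using assms by simp
  then have "(\<Sum>P\<in>paths L C. f P) = (\<Sum>P\<in>paths (a + Suc (L - 1 - a)) C. f (take a P @ drop a P))"
    by simp
  also have "\<dots> = (\<Sum>P1\<in>paths a C. \<Sum>z\<in>C. \<Sum>P2\<in>paths (L - 1 - a) C. f (P1 @ z # P2))"
    by (simp only: sum_paths_append[where f = "\<lambda>P1 Q. f (P1 @ Q)"] sum_paths_Suc)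
  finally show ?thesis .
qed

lemma sum_paths_split2:
  assumes "Suc a < L"
  shows "(\<Sum>P\<in>paths L C. f P)
       = (\<Sum>P1\<in>paths a C. \<Sum>w\<in>C. \<Sum>z\<in>C. \<Sum>P2\<in>paths (L - 2 - a) C. f (P1 @ w # z # P2))"
proof -
  have "L - 1 - a = Suc (L - 2 - a)" using assms by simp
  then show ?thesis using assms by (simp add: sum_paths_split[of a L] sum_paths_Suc)
qed

definition word_degree :: "('f, 'a, 'x) tword \<Rightarrow> int" where
  "word_degree w = fst (fst w) + sum_list (map fst (fst (snd w)))"

definition word_end :: "('f, 'a, 'x) tword \<Rightarrow> 'x" where
  "word_end w = snd (snd w)"

definition extend_word ::
  "('x \<Rightarrow> nat) \<Rightarrow> ('x \<Rightarrow> 'x \<Rightarrow> 'a) \<Rightarrow> ('f, 'a, 'x) tword \<Rightarrow> 'x list \<Rightarrow> ('f, 'a, 'x) tword" where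
  "extend_word ind M w zs = (fst w, fst (snd w) @ path_entries ind M (word_end w) zs, last (word_end w # zs))"

definition tau_extend ::
  "('x \<Rightarrow> nat) \<Rightarrow> ('x \<Rightarrow> nat) \<Rightarrow> ('x \<Rightarrow> 'x \<Rightarrow> 'a) \<Rightarrow> ('f, 'a, 'x) tword \<Rightarrow> 'x \<Rightarrow> ('f, 'a, 'x) tword" where
  "tau_extend ind0 ind1 \<tau> w y =
     (fst w, fst (snd w) @ [(int (ind0 (word_end w)) - int (ind1 y), \<tau> (word_end w) y)], y)"

lemma mtil_eq_formal_sum:
  "mtil C ind M w = formal_sum C (\<lambda>y. ksign (word_degree w)) (\<lambda>y. extend_word ind M w [y])"
proof -
  obtain pa gs x where w: "w = (pa, gs, x)" by (cases w) auto
  show ?thesis unfolding w mtil_def formal_sum_def extend_word_def word_degree_def word_end_def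
    by (simp add: ksign_minus_one_mult ksign_minus_minus entry_def cong: if_cong)
qed

lemma tautil_eq_formal_sum: "tautil C1 ind0 ind1 \<tau> w = formal_sum C1 (\<lambda>_. 1) (tau_extend ind0 ind1 \<tau> w)"
proof -
  obtain pa gs x where w: "w = (pa, gs, x)" by (cases w) auto
  show ?thesis unfolding w tautil_def formal_sum_def tau_extend_def word_end_def by simp
qed

lemma lext_tautil_formal_sum:
  assumes "finite I" "finite C1"
  shows "lext (tautil C1 ind0 ind1 \<tau>) (formal_sum I k w)
       = formal_sum (I \<times> C1) (\<lambda>(i, y). k i) (\<lambda>(i, y). tau_extend ind0 ind1 \<tau> (w i) y)"
  using lext_formal_sum_extend[OF assms tautil_eq_formal_sum] by simp

lemma lext_mtil_formal_sum:
  assumes "finite I" "finite C"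
  shows "lext (mtil C ind M) (formal_sum I k w)
       = formal_sum (I \<times> C) (\<lambda>(i, y). k i * ksign (word_degree (w i))) (\<lambda>(i, y). extend_word ind M (w i) [y])"
  by (rule lext_formal_sum_extend[OF assms]) (rule mtil_eq_formal_sum)

lemma lext_mtil_power:
  assumes "finite I" "finite C"
  shows "(lext (mtil C ind M) ^^ n) (formal_sum I k w)
       = formal_sum (I \<times> paths n C)
           (\<lambda>(i, zs). k i * ksign (path_sign ind (word_degree (w i)) (word_end (w i)) zs))
           (\<lambda>(i, zs). extend_word ind M (w i) zs)"
proof (induction n)
  case 0
  have "bij_betw (\<lambda>i. (i, [])) I (I \<times> paths 0 C)"
    by (rule bij_betwI') auto
  then show ?case
    by (simp add: formal_sum_reindex[of "\<lambda>i. (i, [])" I] o_def extend_word_def word_end_def)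
next
  case (Suc n)
  have snoc: "bij_betw (\<lambda>((i, zs), y). (i, zs @ [y])) ((I \<times> paths n C) \<times> C) (I \<times> paths (Suc n) C)"
  proof (rule bij_betw_byWitness[where f' = "\<lambda>(i, zs). ((i, butlast zs), last zs)"])
    have "zs \<noteq> [] \<and> last zs \<in> C" if "zs \<in> paths (Suc n) C" for zs
      using that last_in_set[of zs] by (fastforce simp: paths_def)
    then show "(\<lambda>(i, zs). ((i, butlast zs), last zs)) ` (I \<times> paths (Suc n) C) \<subseteq> (I \<times> paths n C) \<times> C"
      and "\<forall>b\<in>I \<times> paths (Suc n) C. (\<lambda>((i, zs), y). (i, zs @ [y])) ((\<lambda>(i, zs). ((i, butlast zs), last zs)) b) = b"
      by (auto simp: paths_def dest: in_set_butlastD)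
  qed (auto simp: paths_def)
  have "(lext (mtil C ind M) ^^ Suc n) (formal_sum I k w)
     = formal_sum ((I \<times> paths n C) \<times> C)
         (\<lambda>((i, zs), y). k i * ksign (path_sign ind (word_degree (w i)) (word_end (w i)) zs)
                           * ksign (word_degree (extend_word ind M (w i) zs)))
         (\<lambda>((i, zs), y). extend_word ind M (extend_word ind M (w i) zs) [y])"
    using assms by (simp add: Suc lext_mtil_formal_sum split_def)
  also have "\<dots> = formal_sum (I \<times> paths (Suc n) C)
           (\<lambda>(i, zs). k i * ksign (path_sign ind (word_degree (w i)) (word_end (w i)) zs))
           (\<lambda>(i, zs). extend_word ind M (w i) zs)"
    by (subst formal_sum_reindex[OF snoc])
       (auto intro!: formal_sum_cong simp: extend_word_def word_end_def word_degree_def path_entries_append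
         path_sign_append[where M = M] ksign_add mult.assoc)
  finally show ?case .
qed

definition eval_word ::
  "(nat \<Rightarrow> 'f::ab_group_add \<Rightarrow> 'a list \<Rightarrow> 'f) \<Rightarrow> nat \<Rightarrow> int \<Rightarrow> ('f, 'a, 'x) tword \<Rightarrow> 'x \<Rightarrow> int \<Rightarrow> 'f" where
  "eval_word \<nu> n k w y q =
     (if word_end w = y \<and> length (fst (snd w)) = n \<and> word_degree w + int n - 1 = q
      then zmul k (\<nu> (n + 1) (snd (fst w)) (map snd (fst (snd w)))) else 0)"

lemma evalnu_formal_sum:
  assumes "finite I"
  shows "evalnu \<nu> n (formal_sum I k w) y q = (\<Sum>i\<in>I. eval_word \<nu> n (k i) (w i) y q)"
proof -
  have "evalnu \<nu> n s y q = Sum_any (\<lambda>u. eval_word \<nu> n (s u) u y q)" for s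
    unfolding evalnu_def by (intro arg_cong[where f = Sum_any] ext)
      (auto simp: eval_word_def word_end_def word_degree_def split: prod.split)
  moreover have "eval_word \<nu> n (\<Sum>i\<in>I. if u = w i then k i else 0) u y q
      = (\<Sum>i\<in>I. if u = w i then eval_word \<nu> n (k i) (w i) y q else 0)" for u
    using assms by (auto simp: eval_word_def zmul_sum intro!: sum.cong sum.neutral)
  ultimately show ?thesis
    by (simp only:) (rule Sum_any_formal_sum, auto simp: assms eval_word_def)
qed

definition support :: "('x \<Rightarrow> int \<Rightarrow> 'f::zero) \<Rightarrow> ('x \<times> int) set" where
  "support c = {(x, p). c x p \<noteq> 0}"

lemma emb_eq_formal_sum:
  fixes c :: "'x \<Rightarrow> int \<Rightarrow> 'f::ab_group_add"
  assumes "\<And>x p. c x p \<noteq> 0 \<Longrightarrow> x \<in> C" "finite (support c)"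
  shows "(emb C c :: ('f, 'a, 'x) tword \<Rightarrow> int) = formal_sum (support c) (\<lambda>_. 1) (\<lambda>(x, p). ((p, c x p), [], x))"
proof
  fix v :: "('f, 'a, 'x) tword"
  obtain p \<alpha> gs x where v: "v = ((p, \<alpha>), gs, x)" by (cases v) auto
  have "formal_sum (support c) (\<lambda>_. 1) (\<lambda>(x, p). ((p, c x p), [], x)) v
      = (\<Sum>i\<in>support c. if i = (x, p) then (if gs = [] \<and> \<alpha> = c x p then 1 else 0) else 0)"
    unfolding formal_sum_def v by (rule sum.cong) auto
  also have "\<dots> = emb C c v"
    using assms by (auto simp: v emb_def support_def)
  finally show "emb C c v = formal_sum (support c) (\<lambda>_. 1) (\<lambda>(x, p). ((p, c x p), [], x)) v" ..
qed

section \<open>An \<open>\<A>\<^sub>\<infinity>\<close>-module over a dg algebra\<close>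

locale dga_module =
  fixes Ah :: "int \<Rightarrow> 'a::ab_group_add \<Rightarrow> bool" and dA :: "'a \<Rightarrow> 'a" and mA :: "'a \<Rightarrow> 'a \<Rightarrow> 'a"
    and Fh :: "int \<Rightarrow> 'f::ab_group_add \<Rightarrow> bool" and \<nu> :: "nat \<Rightarrow> 'f \<Rightarrow> 'a list \<Rightarrow> 'f"
  assumes dga: "cubical_dga Ah dA mA" and module: "ainf_module Ah dA mA Fh \<nu>"
begin

lemma Ah_graded: "graded_group Ah"
  using dga by (simp add: cubical_dga_def)

lemma Ah_0: "Ah d 0"
  using Ah_graded by (simp add: graded_group_def)

lemma Ah_zsgn: "Ah d a \<Longrightarrow> Ah d (zsgn k a)"
  using Ah_graded by (simp add: graded_group_def zsgn_def)

lemma Ah_negative: "Ah d a \<Longrightarrow> d < 0 \<Longrightarrow> a = 0"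
  using dga by (simp add: cubical_dga_def)

lemma dA_add: "dA (a + b) = dA a + dA b"
  using dga by (simp add: cubical_dga_def)

lemma mA_add_left: "mA (a + b) c = mA a c + mA b c"
  using dga by (simp add: cubical_dga_def)

lemma mA_add_right: "mA a (b + c) = mA a b + mA a c"
  using dga by (simp add: cubical_dga_def)

lemma dA_zero [simp]: "dA 0 = 0"
  using dA_add[of 0 0] by simp

lemma mA_zero_left [simp]: "mA 0 b = 0"
  using mA_add_left[of 0 0 b] by simp

lemma mA_zero_right [simp]: "mA a 0 = 0"
  using mA_add_right[of a 0 0] by simp

lemma dA_zsgn: "dA (zsgn k a) = zsgn k (dA a)"
  using dA_add[of a "- a"] dA_add[of 0 0] by (simp add: zsgn_def eq_neg_iff_add_eq_0 add.commute)

lemma mA_zsgn_left: "mA (zsgn k a) b = zsgn k (mA a b)"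
  using mA_add_left[of a "- a" b] mA_add_left[of 0 0 b] by (simp add: zsgn_def eq_neg_iff_add_eq_0 add.commute)

lemma mA_zsgn_right: "mA a (zsgn k b) = zsgn k (mA a b)"
  using mA_add_right[of a b "- b"] mA_add_right[of a 0 0] by (simp add: zsgn_def eq_neg_iff_add_eq_0 add.commute)

lemma Fh_graded: "graded_group Fh"
  using module by (simp add: ainf_module_def)

lemma Fh_zsgn: "Fh d a \<Longrightarrow> Fh d (zsgn k a)"
  using Fh_graded by (simp add: graded_group_def zsgn_def)

lemma Fh_sum: "(\<And>i. i \<in> I \<Longrightarrow> Fh d (f i)) \<Longrightarrow> Fh d (sum f I)"
  using Fh_graded by (induction I rule: infinite_finite_induct) (auto simp: graded_group_def)

lemma Fh_if: "(P \<Longrightarrow> Fh d a) \<Longrightarrow> Fh d (if P then a else 0)"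
  using Fh_graded by (simp add: graded_group_def)

lemma nu_add: "\<nu> n (a + b) gs = \<nu> n a gs + \<nu> n b gs"
  using module by (simp add: ainf_module_def)

lemma nu_zero [simp]: "\<nu> n 0 gs = 0"
  using nu_add[of n 0 0 gs] by simp

lemma nu_zsgn: "\<nu> n (zsgn k a) gs = zsgn k (\<nu> n a gs)"
  using nu_add[of n a "- a" gs] by (simp add: zsgn_def eq_neg_iff_add_eq_0 add.commute)

lemma nu_sum: "\<nu> n (sum f I) gs = (\<Sum>i\<in>I. \<nu> n (f i) gs)"
  by (induction I rule: infinite_finite_induct) (auto simp: nu_add)

lemma nu_slot_add: "\<nu> n a (gs @ (x + y) # hs) = \<nu> n a (gs @ x # hs) + \<nu> n a (gs @ y # hs)"
  using module by (simp add: ainf_module_def)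

lemma nu_slot_zero: "\<nu> n a (gs @ 0 # hs) = 0"
  using nu_slot_add[of n a gs 0 0 hs] by simp

lemma nu_zero_entry: "0 \<in> set gs \<Longrightarrow> \<nu> n a gs = 0"
  by (metis nu_slot_zero split_list)

lemma nu_slot_zsgn: "\<nu> n a (gs @ zsgn k x # hs) = zsgn k (\<nu> n a (gs @ x # hs))"
  using nu_slot_add[of n a gs x "- x" hs] by (simp add: zsgn_def nu_slot_zero eq_neg_iff_add_eq_0 add.commute)

lemma nu_slot_sum: "\<nu> n a (gs @ sum f I # hs) = (\<Sum>i\<in>I. \<nu> n a (gs @ f i # hs))"
  by (induction I rule: infinite_finite_induct) (auto simp: nu_slot_add nu_slot_zero)

lemma nu_degree:
  "1 \<le> n \<Longrightarrow> length gs = n - 1 \<Longrightarrow> Fh p \<alpha> \<Longrightarrow> list_all (\<lambda>(d, a). Ah d a) gs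
   \<Longrightarrow> Fh (p + sum_list (map fst gs) + int n - 2) (\<nu> n \<alpha> (map snd gs))"
  using module by (simp add: ainf_module_def)

lemma ainf_relation:
  "1 \<le> N \<Longrightarrow> length gs = N - 1 \<Longrightarrow> Fh p \<alpha> \<Longrightarrow> list_all (\<lambda>(d, a). Ah d a) gs
   \<Longrightarrow> ainf_mod_lhs dA mA \<nu> N p \<alpha> gs = 0"
  using module by (simp add: ainf_module_def)

lemma twisting_cocycle_degree:
  "twisting_cocycle Ah dA mA C ind M \<Longrightarrow> x \<in> C \<Longrightarrow> y \<in> C \<Longrightarrow> Ah (int (ind x) - int (ind y) - 1) (M x y)"
  by (simp add: twisting_cocycle_def)

lemma twisting_cocycle_diff:
  "twisting_cocycle Ah dA mA C ind M \<Longrightarrow> x \<in> C \<Longrightarrow> y \<in> C \<Longrightarrow>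
   dA (M x y) = (\<Sum>z\<in>C. zsgn (int (ind x) - int (ind z)) (mA (M x z) (M z y)))"
  by (simp add: twisting_cocycle_def)

text \<open>Coefficients have degree \<open>ind x - ind y - 1\<close> and negative degrees vanish, so the index
  drops along every nonzero path: a path longer than the index of its start carries a zero.\<close>

lemma long_path_has_zero_entry:
  assumes tc: "twisting_cocycle Ah dA mA C ind M"
  shows "x \<in> C \<Longrightarrow> set zs \<subseteq> C \<Longrightarrow> ind x < length zs \<Longrightarrow> 0 \<in> set (map snd (path_entries ind M x zs))"
proof (induction zs arbitrary: x)
  case (Cons z zs)
  show ?case
  proof (cases "ind x \<le> ind z")
    case True
    then have "M x z = 0" using Ah_negative[OF twisting_cocycle_degree[OF tc, of x z]] Cons.prems by auto
    then show ?thesis by (simp add: entry_def)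
  next
    case False
    then show ?thesis using Cons by simp
  qed
qed simp

lemma path_entries_homogeneous:
  assumes tc: "twisting_cocycle Ah dA mA C ind M"
  shows "x \<in> C \<Longrightarrow> set zs \<subseteq> C \<Longrightarrow> list_all (\<lambda>(d, a). Ah d a) (path_entries ind M x zs)"
  by (induction zs arbitrary: x) (auto simp: entry_def twisting_cocycle_degree[OF tc])

end

text \<open>\<open>path_sum \<nu> C ind M n pre d x \<alpha> y\<close> is the \<open>y\<close>-component of \<open>(\<nu> \<otimes> 1) m\<^sup>~\<^sup>n\<close> applied to
  the word \<open>\<alpha> \<otimes> pre \<otimes> x\<close> of total degree \<open>d\<close>.\<close>

definition path_sum :: "(nat \<Rightarrow> 'f::ab_group_add \<Rightarrow> 'a list \<Rightarrow> 'f) \<Rightarrow> 'x set \<Rightarrow> ('x \<Rightarrow> nat) \<Rightarrow> ('x \<Rightarrow> 'x \<Rightarrow> 'a)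
   \<Rightarrow> nat \<Rightarrow> 'a list \<Rightarrow> int \<Rightarrow> 'x \<Rightarrow> 'f \<Rightarrow> 'x \<Rightarrow> 'f" where
  "path_sum \<nu> C ind M n pre d x \<alpha> y = (\<Sum>zs\<in>paths n C. if last (x # zs) = y
      then zsgn (path_sign ind d x zs) (\<nu> (length pre + n + 1) \<alpha> (pre @ map snd (path_entries ind M x zs)))
      else 0)"

lemma path_sum_0: "path_sum \<nu> C ind M 0 pre d x \<alpha> y = (if x = y then \<nu> (length pre + 1) \<alpha> pre else 0)"
  by (simp add: path_sum_def)

lemma path_sum_Suc:
  "path_sum \<nu> C ind M (Suc n) pre d x \<alpha> y
   = (\<Sum>z\<in>C. zsgn d (path_sum \<nu> C ind M n (pre @ [M x z]) (d + int (ind x) - int (ind z) - 1) z \<alpha> y))"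
  unfolding path_sum_def sum_paths_Suc
  by (auto intro!: sum.cong simp: zsgn_sum zsgn_exp_add entry_def cong: if_cong)

lemma sum_pairs_on_graph:
  assumes "finite S" "finite C" "\<And>x p. (x, p) \<in> S \<Longrightarrow> x \<in> C"
    "\<And>x. x \<in> C \<Longrightarrow> (x, g x) \<notin> S \<Longrightarrow> F x (g x) = 0"
  shows "(\<Sum>(x, p)\<in>S. if p = g x then F x p else 0) = (\<Sum>x\<in>C. F x (g x))"
proof -
  have "(\<Sum>(x, p)\<in>S. if p = g x then F x p else 0) = (\<Sum>(x, p)\<in>S \<inter> {(x, p). p = g x}. F x p)"
    using assms(1) by (simp add: sum.inter_filter[symmetric] split_def) (rule sum.cong; auto)
  also have "S \<inter> {(x, p). p = g x} = (\<lambda>x. (x, g x)) ` {x\<in>C. (x, g x) \<in> S}"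
    using assms(3) by auto
  also have "(\<Sum>(x, p)\<in>(\<lambda>x. (x, g x)) ` {x\<in>C. (x, g x) \<in> S}. F x p) = (\<Sum>x\<in>{x\<in>C. (x, g x) \<in> S}. F x (g x))"
    by (subst sum.reindex) (auto simp: inj_on_def)
  also have "\<dots> = (\<Sum>x\<in>C. F x (g x))"
    by (rule sum.mono_neutral_left) (use assms in auto)
  finally show ?thesis .
qed

context dga_module
begin

lemma path_sum_sum: "path_sum \<nu> C ind M n pre d x (sum f I) y = (\<Sum>i\<in>I. path_sum \<nu> C ind M n pre d x (f i) y)"
  unfolding path_sum_def nu_sum zsgn_sum by (subst sum.swap) (auto intro!: sum.cong)

lemma path_sum_zsgn: "path_sum \<nu> C ind M n pre d x (zsgn k a) y = zsgn k (path_sum \<nu> C ind M n pre d x a y)"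
  unfolding path_sum_def
  by (simp add: nu_zsgn zsgn_sum cong: if_cong) (rule sum.cong; simp add: zsgn_exp_add[symmetric] add.commute)

lemma path_sum_zero [simp]: "path_sum \<nu> C ind M n pre d x 0 y = 0"
  unfolding path_sum_def by (simp cong: if_cong)

lemma path_sum_prefix_zsgn:
  "path_sum \<nu> C ind M n (pre @ [zsgn k a]) d x \<alpha> y = zsgn k (path_sum \<nu> C ind M n (pre @ [a]) d x \<alpha> y)"
  unfolding path_sum_def
  by (simp add: zsgn_sum cong: if_cong) (rule sum.cong; simp add: nu_slot_zsgn zsgn_exp_add[symmetric] add.commute)

lemma path_sum_prefix_zero: "0 \<in> set pre \<Longrightarrow> path_sum \<nu> C ind M n pre d x \<alpha> y = 0"
  unfolding path_sum_def by (auto intro!: sum.neutral simp: nu_zero_entry)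

lemma path_sum_outside: "x \<in> C \<Longrightarrow> y \<notin> C \<Longrightarrow> path_sum \<nu> C ind M n pre d x \<alpha> y = 0"
  unfolding path_sum_def by (rule sum.neutral) (use last_in_path[of x C] in \<open>fastforce simp: paths_def\<close>)

lemma path_sum_long:
  assumes tc: "twisting_cocycle Ah dA mA C ind M" and x: "x \<in> C" and n: "ind x < n"
  shows "path_sum \<nu> C ind M n pre d x \<alpha> y = 0"
  unfolding path_sum_def
  by (rule sum.neutral) (use long_path_has_zero_entry[OF tc x] n in \<open>auto simp: paths_def nu_zero_entry\<close>)

lemma path_sum_degree:
  assumes tc: "twisting_cocycle Ah dA mA C ind M" and x: "x \<in> C" and \<alpha>: "Fh p \<alpha>"
  shows "Fh (p + int (ind x) - int (ind y) - 1) (path_sum \<nu> C ind M n [] p x \<alpha> y)"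
  unfolding path_sum_def
proof (intro Fh_sum Fh_if Fh_zsgn)
  fix zs assume zs: "zs \<in> paths n C" and y: "last (x # zs) = y"
  have "Fh (p + sum_list (map fst (path_entries ind M x zs)) + int (n + 1) - 2) (\<nu> (n + 1) \<alpha> (map snd (path_entries ind M x zs)))"
    by (rule nu_degree) (use zs \<alpha> path_entries_homogeneous[OF tc x] in \<open>auto simp: paths_def\<close>)
  moreover have "p + sum_list (map fst (path_entries ind M x zs)) + int (n + 1) - 2 = p + int (ind x) - int (ind y) - 1"
    using zs y by (simp add: path_degree paths_def)
  ultimately show "Fh (p + int (ind x) - int (ind y) - 1) (\<nu> (length [] + n + 1) \<alpha> ([] @ map snd (path_entries ind M x zs)))"
    by (metis append_Nil list.size(3) add_0)
qed

end

lemma cchainD: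
  assumes "cchain C Fh c"
  shows "finite (support c)" "c x p \<noteq> 0 \<Longrightarrow> x \<in> C" "Fh p (c x p)"
  using assms by (auto simp: cchain_def support_def)

lemma cchain_shifted_support:
  fixes f :: "'x \<Rightarrow> int \<Rightarrow> 'f::ab_group_add"
  assumes c: "cchain C Fh c" and C': "finite C'"
    and nonzero: "\<And>y q. f y q \<noteq> 0 \<Longrightarrow> y \<in> C' \<and> (\<exists>x\<in>C. c x (q + s x y) \<noteq> 0)"
    and degree: "\<And>y q. Fh q (f y q)"
  shows "cchain C' Fh f"
proof -
  have "support f \<subseteq> (\<lambda>(y, x, p). (y, p - s x y)) ` (C' \<times> support c)"
  proof
    fix yq assume "yq \<in> support f"
    then obtain y q where yq: "yq = (y, q)" "f y q \<noteq> 0" by (auto simp: support_def)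
    with nonzero obtain x where "y \<in> C'" "c x (q + s x y) \<noteq> 0" by blast
    then show "yq \<in> (\<lambda>(y, x, p). (y, p - s x y)) ` (C' \<times> support c)"
      unfolding yq(1) by (intro image_eqI[of _ _ "(y, x, q + s x y)"]) (auto simp: support_def)
  qed
  then have "finite (support f)"
    by (rule finite_subset) (use C' cchainD(1)[OF c] in auto)
  with nonzero degree show ?thesis
    by (auto simp: cchain_def support_def)
qed

context dga_module
begin

lemma evalnu_mtil_power_emb:
  fixes c :: "'x \<Rightarrow> int \<Rightarrow> 'f::ab_group_add"
  assumes C: "finite C" and c: "cchain C Fh c"
  shows "evalnu \<nu> n ((lext (mtil C ind M) ^^ n) (emb C c :: ('f, 'a, 'x) tword \<Rightarrow> int)) y q
     = (\<Sum>x\<in>C. path_sum \<nu> C ind M n [] (q + int (ind y) + 1 - int (ind x)) x (c x (q + int (ind y) + 1 - int (ind x))) y)"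
proof -
  let ?g = "\<lambda>x. q + int (ind y) + 1 - int (ind x)"
  have "evalnu \<nu> n ((lext (mtil C ind M) ^^ n) (emb C c :: ('f, 'a, 'x) tword \<Rightarrow> int)) y q
     = (\<Sum>(x, p)\<in>support c. \<Sum>zs\<in>paths n C.
          eval_word \<nu> n (ksign (path_sign ind p x zs)) (extend_word ind M ((p, c x p), [], x) zs) y q)"
    by (simp add: emb_eq_formal_sum cchainD[OF c] lext_mtil_power C evalnu_formal_sum split_def
        word_degree_def word_end_def sum.cartesian_product)
  also have "\<dots> = (\<Sum>(x, p)\<in>support c. if p = ?g x then path_sum \<nu> C ind M n [] p x (c x p) y else 0)"
    unfolding path_sum_def
    by (intro sum.cong refl, clarify)
       (auto intro!: sum.cong sum.neutral simp: eval_word_def extend_word_def word_end_def word_degree_def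
         zmul_ksign path_degree paths_def)
  also have "\<dots> = (\<Sum>x\<in>C. path_sum \<nu> C ind M n [] (?g x) x (c x (?g x)) y)"
    by (rule sum_pairs_on_graph) (use C cchainD[OF c] in \<open>auto simp: support_def path_sum_def cong: if_cong\<close>)
  finally show ?thesis .
qed

end

locale twisted_module = dga_module Ah dA mA Fh \<nu>
  for Ah :: "int \<Rightarrow> 'a::ab_group_add \<Rightarrow> bool" and dA and mA
    and Fh :: "int \<Rightarrow> 'f::ab_group_add \<Rightarrow> bool" and \<nu> +
  fixes C :: "'x set" and ind :: "'x \<Rightarrow> nat" and M :: "'x \<Rightarrow> 'x \<Rightarrow> 'a"
  assumes cocycle: "twisting_cocycle Ah dA mA C ind M" and finite_crit: "finite C"
begin

lemma morse_diff_eq_path_sums: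
  fixes c :: "'x \<Rightarrow> int \<Rightarrow> 'f"
  assumes c: "cchain C Fh c" and B: "\<And>x. x \<in> C \<Longrightarrow> ind x < B"
  shows "morse_diff C ind M \<nu> c y q
     = (\<Sum>n<B. \<Sum>x\<in>C. path_sum \<nu> C ind M n [] (q + int (ind y) + 1 - int (ind x)) x
                          (c x (q + int (ind y) + 1 - int (ind x))) y)"
  unfolding morse_diff_def evalnu_mtil_power_emb[OF finite_crit c]
  by (rule Sum_any.expand_superset) (auto intro!: sum.neutral path_sum_long[OF cocycle] dest: B)

lemma index_bound_exists: "\<exists>B. \<forall>x\<in>C. ind x < B"
  using finite_crit by (intro exI[of _ "Suc (sum ind C)"]) (simp add: less_Suc_eq_le member_le_sum)

lemma morse_diff_nonzero:
  fixes c :: "'x \<Rightarrow> int \<Rightarrow> 'f"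
  assumes c: "cchain C Fh c" and nz: "morse_diff C ind M \<nu> c y q \<noteq> 0"
  shows "y \<in> C \<and> (\<exists>x\<in>C. c x (q + int (ind y) + 1 - int (ind x)) \<noteq> 0)"
proof (rule ccontr)
  assume "\<not> ?thesis"
  then have "path_sum \<nu> C ind M n [] (q + int (ind y) + 1 - int (ind x)) x (c x (q + int (ind y) + 1 - int (ind x))) y = 0"
    if "x \<in> C" for n x
    using path_sum_outside[OF that] that by auto
  moreover obtain B where "\<And>x. x \<in> C \<Longrightarrow> ind x < B"
    using index_bound_exists by blast
  ultimately show False
    using morse_diff_eq_path_sums[OF c, of B y q] nz by simp
qed

lemma morse_diff_cchain:
  fixes c :: "'x \<Rightarrow> int \<Rightarrow> 'f"
  assumes c: "cchain C Fh c"
  shows "cchain C Fh (morse_diff C ind M \<nu> c)"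
proof (rule cchain_shifted_support[OF c finite_crit])
  fix y q
  show "y \<in> C \<and> (\<exists>x\<in>C. c x (q + (int (ind y) + 1 - int (ind x))) \<noteq> 0)"
    if "morse_diff C ind M \<nu> c y q \<noteq> 0"
    using morse_diff_nonzero[OF c that] by (simp add: algebra_simps)
  obtain B where B: "\<And>x. x \<in> C \<Longrightarrow> ind x < B"
    using index_bound_exists by blast
  have "Fh q (path_sum \<nu> C ind M n [] (q + int (ind y) + 1 - int (ind x)) x (c x (q + int (ind y) + 1 - int (ind x))) y)"
    if "x \<in> C" for n x
    using path_sum_degree[OF cocycle that cchainD(3)[OF c], of "q + int (ind y) + 1 - int (ind x)" y n] by simp
  then show "Fh q (morse_diff C ind M \<nu> c y q)"
    using morse_diff_eq_path_sums[OF c B, of y q] by (simp add: Fh_sum)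
qed

end

definition ainf_nu_nu_part :: "(nat \<Rightarrow> 'f::ab_group_add \<Rightarrow> 'a list \<Rightarrow> 'f) \<Rightarrow> nat \<Rightarrow> 'f \<Rightarrow> (int \<times> 'a) list \<Rightarrow> 'f" where
  "ainf_nu_nu_part \<nu> N \<alpha> gs = (\<Sum>s\<in>{1..N}. zsgn (int s * int (N - s))
     (\<nu> (N - s + 1) (\<nu> s \<alpha> (map snd (take (s - 1) gs))) (map snd (drop (s - 1) gs))))"

definition ainf_nu_mu_term :: "('a::ab_group_add \<Rightarrow> 'a) \<Rightarrow> ('a \<Rightarrow> 'a \<Rightarrow> 'a) \<Rightarrow> (nat \<Rightarrow> 'f::ab_group_add \<Rightarrow> 'a list \<Rightarrow> 'f)
     \<Rightarrow> nat \<Rightarrow> int \<Rightarrow> 'f \<Rightarrow> (int \<times> 'a) list \<Rightarrow> nat \<Rightarrow> nat \<Rightarrow> 'f" where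
  "ainf_nu_mu_term dA mA \<nu> N p \<alpha> gs r s = (if r + s \<le> N then
     zsgn (int r + int s * int (N - r - s))
       (zsgn ((int s - 2) * (p + sum_list (map fst (take (r - 1) gs))))
         (\<nu> (N - s + 1) \<alpha>
            (map snd (take (r - 1) gs) @ [muA dA mA s (map snd (take s (drop (r - 1) gs)))]
              @ map snd (drop (r - 1 + s) gs))))
     else 0)"

lemma ainf_mod_lhs_split:
  "ainf_mod_lhs dA mA \<nu> N p \<alpha> gs
   = ainf_nu_nu_part \<nu> N \<alpha> gs + (\<Sum>r\<in>{1..N}. \<Sum>s\<in>{1..N}. ainf_nu_mu_term dA mA \<nu> N p \<alpha> gs r s)"
  unfolding ainf_mod_lhs_def ainf_nu_nu_part_def ainf_nu_mu_term_def ..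

definition dA_term :: "('a \<Rightarrow> 'a) \<Rightarrow> (nat \<Rightarrow> 'f::ab_group_add \<Rightarrow> 'a list \<Rightarrow> 'f)
     \<Rightarrow> nat \<Rightarrow> int \<Rightarrow> 'f \<Rightarrow> (int \<times> 'a) list \<Rightarrow> nat \<Rightarrow> 'f" where
  "dA_term dA \<nu> L p \<alpha> gs a = zsgn (int L) (zsgn (p + sum_list (map fst (take a gs)))
     (\<nu> (Suc L) \<alpha> (map snd (take a gs) @ [dA (snd (gs ! a))] @ map snd (drop (Suc a) gs))))"

definition mA_term :: "('a \<Rightarrow> 'a \<Rightarrow> 'a) \<Rightarrow> (nat \<Rightarrow> 'f::ab_group_add \<Rightarrow> 'a list \<Rightarrow> 'f)
     \<Rightarrow> nat \<Rightarrow> 'f \<Rightarrow> (int \<times> 'a) list \<Rightarrow> nat \<Rightarrow> 'f" where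
  "mA_term mA \<nu> L \<alpha> gs a = zsgn (int a + 1)
     (\<nu> L \<alpha> (map snd (take a gs) @ [mA (snd (gs ! a)) (snd (gs ! Suc a))] @ map snd (drop (Suc (Suc a)) gs)))"

context dga_module
begin

lemma ainf_nu_mu_term_ge3: "3 \<le> s \<Longrightarrow> ainf_nu_mu_term dA mA \<nu> N p \<alpha> gs r s = 0"
  unfolding ainf_nu_mu_term_def muA_def by (simp add: nu_slot_zero)

lemma ainf_nu_mu_term_1:
  assumes "length gs = L"
  shows "ainf_nu_mu_term dA mA \<nu> (Suc L) p \<alpha> gs (Suc a) 1 = (if a < L then dA_term dA \<nu> L p \<alpha> gs a else 0)"
proof (cases "a < L")
  case True
  have d: "drop a gs = gs ! a # drop (Suc a) gs" using assms True by (simp add: Cons_nth_drop_Suc)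
  have e: "int (Suc a) + int (Suc L - Suc a - 1) = int L" using True by simp
  show ?thesis using assms True unfolding ainf_nu_mu_term_def muA_def dA_term_def
    by (simp add: d e zsgn_minus_minus)
qed (simp add: ainf_nu_mu_term_def)

lemma ainf_nu_mu_term_2:
  assumes "length gs = L"
  shows "ainf_nu_mu_term dA mA \<nu> (Suc L) p \<alpha> gs (Suc a) 2 = (if Suc a < L then mA_term mA \<nu> L \<alpha> gs a else 0)"
proof (cases "Suc a < L")
  case True
  have d: "drop a gs = gs ! a # gs ! Suc a # drop (Suc (Suc a)) gs" using assms True
    by (simp add: Cons_nth_drop_Suc)
  have l: "Suc L - 2 + 1 = L" using True by simp
  show ?thesis using assms True unfolding ainf_nu_mu_term_def muA_def mA_term_def
    by (simp add: d l) (rule zsgn_cong, presburger)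
qed (simp add: ainf_nu_mu_term_def)

text \<open>Only \<open>\<mu>\<^sub>1 = dA\<close> and \<open>\<mu>\<^sub>2 = mA\<close> survive in the relation.\<close>

lemma ainf_relation_dga:
  assumes len: "length gs = L" and \<alpha>: "Fh p \<alpha>" and gs: "list_all (\<lambda>(d, a). Ah d a) gs"
  shows "ainf_nu_nu_part \<nu> (Suc L) \<alpha> gs + (\<Sum>a<L. dA_term dA \<nu> L p \<alpha> gs a) + (\<Sum>a<L - 1. mA_term mA \<nu> L \<alpha> gs a) = 0"
proof -
  let ?h = "ainf_nu_mu_term dA mA \<nu> (Suc L) p \<alpha> gs"
  have inner: "(\<Sum>s\<in>{1..Suc L}. ?h r s) = ?h r 1 + ?h r 2" for r
  proof (cases L)
    case 0
    then show ?thesis by (simp add: ainf_nu_mu_term_def)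
  next
    case (Suc L')
    have "{1..Suc L} = {1, 2} \<union> {3..Suc L}" using Suc by auto
    then show ?thesis by (simp add: sum.union_disjoint ainf_nu_mu_term_ge3)
  qed
  have "(\<Sum>r\<in>{1..Suc L}. ?h r 1) = (\<Sum>a<Suc L. if a < L then dA_term dA \<nu> L p \<alpha> gs a else 0)"
    unfolding One_nat_def sum.atLeast1_atMost_eq by (simp add: ainf_nu_mu_term_1[OF len, unfolded One_nat_def])
  also have "\<dots> = (\<Sum>a<L. dA_term dA \<nu> L p \<alpha> gs a)"
    by (simp add: sum.If_cases Int_absorb1)
  finally have dA_part: "(\<Sum>r\<in>{1..Suc L}. ?h r 1) = (\<Sum>a<L. dA_term dA \<nu> L p \<alpha> gs a)" .
  have "(\<Sum>r\<in>{1..Suc L}. ?h r 2) = (\<Sum>a<Suc L. if Suc a < L then mA_term mA \<nu> L \<alpha> gs a else 0)"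
    unfolding One_nat_def sum.atLeast1_atMost_eq by (simp add: ainf_nu_mu_term_2[OF len])
  also have "\<dots> = (\<Sum>a<L - 1. mA_term mA \<nu> L \<alpha> gs a)"
    by (rule sum.mono_neutral_cong_right) auto
  finally have mA_part: "(\<Sum>r\<in>{1..Suc L}. ?h r 2) = (\<Sum>a<L - 1. mA_term mA \<nu> L \<alpha> gs a)" .
  have "ainf_mod_lhs dA mA \<nu> (Suc L) p \<alpha> gs = 0"
    by (rule ainf_relation) (use len \<alpha> gs in auto)
  then show ?thesis
    unfolding ainf_mod_lhs_split inner sum.distrib dA_part mA_part by (simp add: add.assoc)
qed

end

section \<open>The square of a twisted differential\<close>

lemma sum_lessThan_triangle:
  "(\<Sum>L<(B::nat). \<Sum>n\<le>L. g n (L - n)) = (\<Sum>n<B. \<Sum>n'<B. if n + n' < B then g n n' else (0::'b::comm_monoid_add))"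
proof -
  have "(\<Sum>L<B. \<Sum>n\<le>L. g n (L - n)) = (\<Sum>(L, n)\<in>Sigma {..<B} (\<lambda>L. {..L}). g n (L - n))"
    by (rule sum.Sigma) auto
  also have "\<dots> = (\<Sum>(n, n')\<in>{(n, n'). n + n' < B}. g n n')"
    by (rule sum.reindex_bij_witness[where i = "\<lambda>(n, n'). (n + n', n)" and j = "\<lambda>(L, n). (n, L - n)"]) auto
  also have "\<dots> = (\<Sum>(n, n')\<in>{..<B} \<times> {..<B}. if n + n' < B then g n n' else 0)"
    by (rule sum.mono_neutral_cong_left) (auto split: if_splits)
  finally show ?thesis
    by (simp add: sum.cartesian_product)
qed

lemma path_sign_take_drop:
  assumes "n \<le> length P"
  shows "even ((path_sign ind p x (take n P)
              + path_sign ind (p + int (ind x) - int (ind (last (x # take n P))) - 1) (last (x # take n P)) (drop n P))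
           - (path_sign ind p x P + int (n + 1) * int (length P - n)))"
proof -
  define z where "z = last (x # take n P)"
  define T where "T = take n P"
  define D where "D = drop n P"
  define a where "a = path_sign ind p x T"
  define X where "X = path_sign ind (p + (int (ind x) - int (ind z) - int n)) z D"
  define k where "k = int (length P - n)"
  have P: "P = T @ D" unfolding T_def D_def by simp
  have lT: "length T = n" using assms unfolding T_def by simp
  have lD: "int (length D) = k" unfolding D_def k_def by simp
  have s: "sum_list (map fst (path_entries ind M x T)) = int (ind x) - int (ind z) - int n"
    unfolding z_def T_def[symmetric] using path_degree[of ind M x T] lT by simp
  have zT: "last (x # T) = z" unfolding z_def T_def ..
  have h1: "path_sign ind p x P = a + X"
  proof -
    have "path_sign ind p x P
        = path_sign ind p x T + path_sign ind (p + sum_list (map fst (path_entries ind M x T))) (last (x # T)) D"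
      unfolding P by (rule path_sign_append)
    also have "\<dots> = a + X" unfolding a_def X_def s zT ..
    finally show ?thesis .
  qed
  have "p + int (ind x) - int (ind z) - 1 = (p + (int (ind x) - int (ind z) - int n)) + (int n - 1)"
    by simp
  then have h2: "path_sign ind (p + int (ind x) - int (ind z) - 1) z D = X + (int n - 1) * k"
    unfolding X_def lD[symmetric] by (simp only: path_sign_shift)
  have h3: "(a + (X + (int n - 1) * k)) - (a + X + int (n + 1) * k) = 2 * (- k)"
    by (simp add: algebra_simps)
  show ?thesis
    unfolding T_def[symmetric] D_def[symmetric] zT h1 h2 a_def[symmetric] k_def[symmetric] h3 by simp
qed

context twisted_module
begin

text \<open>The summand of \<open>d \<circ> d\<close> for the pair of paths \<open>x \<rightarrow> zs\<close>, \<open>last (x # zs) \<rightarrow> zs'\<close>.\<close>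

definition nested_path_term :: "int \<Rightarrow> 'x \<Rightarrow> 'f \<Rightarrow> 'x \<Rightarrow> 'x list \<Rightarrow> 'x list \<Rightarrow> 'f" where
  "nested_path_term p x \<alpha> y zs zs' = (if last (last (x # zs) # zs') = y
     then zsgn (path_sign ind p x zs + path_sign ind (p + int (ind x) - int (ind (last (x # zs))) - 1) (last (x # zs)) zs')
       (\<nu> (length zs' + 1) (\<nu> (length zs + 1) \<alpha> (map snd (path_entries ind M x zs)))
          (map snd (path_entries ind M (last (x # zs)) zs')))
     else 0)"

lemma path_sum_path_sum:
  assumes x: "x \<in> C"
  shows "(\<Sum>z\<in>C. path_sum \<nu> C ind M n' [] (p + int (ind x) - int (ind z) - 1) z (path_sum \<nu> C ind M n [] p x \<alpha> z) y)
       = (\<Sum>zs\<in>paths n C. \<Sum>zs'\<in>paths n' C. nested_path_term p x \<alpha> y zs zs')"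
proof -
  let ?inner = "\<lambda>zs z. path_sum \<nu> C ind M n' [] (p + int (ind x) - int (ind z) - 1) z
                          (\<nu> (n + 1) \<alpha> (map snd (path_entries ind M x zs))) y"
  have "(\<Sum>z\<in>C. path_sum \<nu> C ind M n' [] (p + int (ind x) - int (ind z) - 1) z (path_sum \<nu> C ind M n [] p x \<alpha> z) y)
     = (\<Sum>z\<in>C. \<Sum>zs\<in>paths n C. if last (x # zs) = z then zsgn (path_sign ind p x zs) (?inner zs z) else 0)"
    unfolding path_sum_def[of _ _ _ _ n]
    by (simp add: path_sum_sum path_sum_zsgn if_distrib[where f = "\<lambda>a. path_sum _ _ _ _ _ _ _ _ a _"] cong: if_cong)
  also have "\<dots> = (\<Sum>zs\<in>paths n C. \<Sum>z\<in>C. if z = last (x # zs) then zsgn (path_sign ind p x zs) (?inner zs z) else 0)"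
    by (subst sum.swap) (intro sum.cong refl, auto)
  also have "\<dots> = (\<Sum>zs\<in>paths n C. zsgn (path_sign ind p x zs) (?inner zs (last (x # zs))))"
    by (rule sum.cong[OF refl]) (use x finite_crit in \<open>auto simp: sum.delta paths_def; meson last_in_set subsetD\<close>)
  also have "\<dots> = (\<Sum>zs\<in>paths n C. \<Sum>zs'\<in>paths n' C. nested_path_term p x \<alpha> y zs zs')"
    unfolding path_sum_def nested_path_term_def zsgn_sum
    by (intro sum.cong refl) (auto simp: paths_def zsgn_exp_add)
  finally show ?thesis .
qed

lemma nested_path_term_long:
  assumes x: "x \<in> C" and zs: "set zs \<subseteq> C" "set zs' \<subseteq> C" and B: "\<And>z. z \<in> C \<Longrightarrow> ind z < B"
    and len: "B \<le> length zs + length zs'"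
  shows "nested_path_term p x \<alpha> y zs zs' = 0"
proof -
  have "0 \<in> set (map snd (path_entries ind M x (zs @ zs')))"
    using long_path_has_zero_entry[OF cocycle x, of "zs @ zs'"] zs B[OF x] len by simp
  then have "0 \<in> set (map snd (path_entries ind M x zs)) \<or> 0 \<in> set (map snd (path_entries ind M (last (x # zs)) zs'))"
    by (simp add: path_entries_append)
  then show ?thesis
  proof
    assume "0 \<in> set (map snd (path_entries ind M x zs))"
    then have "\<nu> (length zs + 1) \<alpha> (map snd (path_entries ind M x zs)) = 0" by (rule nu_zero_entry)
    then show ?thesis by (simp add: nested_path_term_def)
  next
    assume "0 \<in> set (map snd (path_entries ind M (last (x # zs)) zs'))"
    then have "\<nu> (length zs' + 1) \<beta> (map snd (path_entries ind M (last (x # zs)) zs')) = 0" for \<beta>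
      by (rule nu_zero_entry)
    then show ?thesis by (simp add: nested_path_term_def)
  qed
qed

lemma sum_nested_path_terms:
  assumes P: "P \<in> paths L C"
  shows "(\<Sum>n\<le>L. nested_path_term p x \<alpha> y (take n P) (drop n P))
     = (if last (x # P) = y then zsgn (path_sign ind p x P) (ainf_nu_nu_part \<nu> (Suc L) \<alpha> (path_entries ind M x P)) else 0)"
proof (cases "last (x # P) = y")
  case True
  have len: "length P = L" using P by (simp add: paths_def)
  have "ainf_nu_nu_part \<nu> (Suc L) \<alpha> (path_entries ind M x P) = (\<Sum>n\<le>L. zsgn (int (Suc n) * int (L - n))
      (\<nu> (L - n + 1) (\<nu> (Suc n) \<alpha> (map snd (take n (path_entries ind M x P)))) (map snd (drop n (path_entries ind M x P)))))"
    unfolding ainf_nu_nu_part_def One_nat_def sum.atLeast1_atMost_eq lessThan_Suc_atMost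
    by (rule sum.cong) (auto simp: Suc_diff_le)
  moreover have "nested_path_term p x \<alpha> y (take n P) (drop n P)
      = zsgn (path_sign ind p x P) (zsgn (int (Suc n) * int (L - n))
          (\<nu> (L - n + 1) (\<nu> (Suc n) \<alpha> (map snd (take n (path_entries ind M x P)))) (map snd (drop n (path_entries ind M x P)))))"
    if "n \<in> {..L}" for n
  proof -
    from that len have n: "n \<le> length P" by simp
    have l: "last (last (x # take n P) # drop n P) = y" using True by (simp only: last_take_drop)
    have "nested_path_term p x \<alpha> y (take n P) (drop n P) = zsgn (path_sign ind p x P + int (n + 1) * int (length P - n))
        (\<nu> (length (drop n P) + 1) (\<nu> (length (take n P) + 1) \<alpha> (map snd (path_entries ind M x (take n P))))
          (map snd (path_entries ind M (last (x # take n P)) (drop n P))))"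
      unfolding nested_path_term_def if_P[OF l] by (rule zsgn_cong[OF path_sign_take_drop[OF n]])
    moreover have "length (drop n P) + 1 = L - n + 1" "length (take n P) + 1 = Suc n" using n len by auto
    ultimately show ?thesis
      unfolding take_path_entries[OF n] drop_path_entries[OF n] zsgn_exp_add len Suc_eq_plus1 by simp
  qed
  ultimately show ?thesis
    using True by (simp add: zsgn_sum)
next
  case False
  then show ?thesis
    unfolding nested_path_term_def last_take_drop by simp
qed

text \<open>Composing two path sums gives, path by path, the \<open>\<nu>\<circ>\<nu>\<close> part of the \<open>\<A>\<^sub>\<infinity>\<close>-relation.\<close>

lemma double_path_sum:
  assumes x: "x \<in> C" and B: "\<And>z. z \<in> C \<Longrightarrow> ind z < B"
  shows "(\<Sum>n<B. \<Sum>z\<in>C. \<Sum>n'<B. path_sum \<nu> C ind M n' [] (p + int (ind x) - int (ind z) - 1) z (path_sum \<nu> C ind M n [] p x \<alpha> z) y)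
      = (\<Sum>L<B. \<Sum>P\<in>paths L C. if last (x # P) = y
           then zsgn (path_sign ind p x P) (ainf_nu_nu_part \<nu> (Suc L) \<alpha> (path_entries ind M x P)) else 0)"
proof -
  have "(\<Sum>n<B. \<Sum>z\<in>C. \<Sum>n'<B. path_sum \<nu> C ind M n' [] (p + int (ind x) - int (ind z) - 1) z (path_sum \<nu> C ind M n [] p x \<alpha> z) y)
     = (\<Sum>n<B. \<Sum>n'<B. \<Sum>zs\<in>paths n C. \<Sum>zs'\<in>paths n' C. nested_path_term p x \<alpha> y zs zs')"
    by (subst sum.swap) (simp add: path_sum_path_sum[OF x])
  also have "\<dots> = (\<Sum>n<B. \<Sum>n'<B. if n + n' < B then (\<Sum>zs\<in>paths n C. \<Sum>zs'\<in>paths n' C. nested_path_term p x \<alpha> y zs zs') else 0)"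
    by (intro sum.cong refl) (auto intro!: sum.neutral nested_path_term_long[OF x _ _ B] simp: paths_def)
  also have "\<dots> = (\<Sum>L<B. \<Sum>n\<le>L. \<Sum>P\<in>paths L C. nested_path_term p x \<alpha> y (take n P) (drop n P))"
  proof -
    have "(\<Sum>zs\<in>paths n C. \<Sum>zs'\<in>paths (L - n) C. nested_path_term p x \<alpha> y zs zs')
        = (\<Sum>P\<in>paths L C. nested_path_term p x \<alpha> y (take n P) (drop n P))" if "n \<le> L" for L n
      using sum_paths_append[of "nested_path_term p x \<alpha> y" n "L - n" C] that by simp
    note split = this
    show ?thesis
      unfolding sum_lessThan_triangle[symmetric]
      by (rule sum.cong[OF refl], rule sum.cong[OF refl]) (simp add: split)
  qed
  also have "\<dots> = (\<Sum>L<B. \<Sum>P\<in>paths L C. if last (x # P) = y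
           then zsgn (path_sign ind p x P) (ainf_nu_nu_part \<nu> (Suc L) \<alpha> (path_entries ind M x P)) else 0)"
    by (subst sum.swap) (simp add: sum_nested_path_terms)
  finally show ?thesis .
qed

end

lemma path_entries_split1:
  assumes "length P1 = a"
  shows "take a (path_entries ind M x (P1 @ z # P2)) = path_entries ind M x P1"
    "path_entries ind M x (P1 @ z # P2) ! a = entry ind M (last (x # P1)) z"
    "drop (Suc a) (path_entries ind M x (P1 @ z # P2)) = path_entries ind M z P2"
  using assms by (simp_all add: path_entries_append nth_append)

lemma path_entries_split2:
  assumes "length P1 = a"
  shows "take a (path_entries ind M x (P1 @ w # z # P2)) = path_entries ind M x P1"
    "path_entries ind M x (P1 @ w # z # P2) ! a = entry ind M (last (x # P1)) w"
    "path_entries ind M x (P1 @ w # z # P2) ! Suc a = entry ind M w z"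
    "drop (Suc (Suc a)) (path_entries ind M x (P1 @ w # z # P2)) = path_entries ind M z P2"
  using assms by (simp_all add: path_entries_append nth_append)

context twisted_module
begin

definition dA_path_total :: "int \<Rightarrow> 'x \<Rightarrow> 'f \<Rightarrow> 'x \<Rightarrow> nat \<Rightarrow> 'f" where
  "dA_path_total p x \<alpha> y L = (\<Sum>P\<in>paths L C. if last (x # P) = y
     then zsgn (path_sign ind p x P) (\<Sum>a<L. dA_term dA \<nu> L p \<alpha> (path_entries ind M x P) a) else 0)"

definition mA_path_total :: "int \<Rightarrow> 'x \<Rightarrow> 'f \<Rightarrow> 'x \<Rightarrow> nat \<Rightarrow> 'f" where
  "mA_path_total p x \<alpha> y L = (\<Sum>P\<in>paths L C. if last (x # P) = y
     then zsgn (path_sign ind p x P) (\<Sum>a<L - 1. mA_term mA \<nu> L \<alpha> (path_entries ind M x P) a) else 0)"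

text \<open>The value of \<open>\<nu>\<close> on the path \<open>x \<rightarrow> P1 \<rightarrow> w \<rightarrow> z \<rightarrow> P2\<close> with the two coefficients at \<open>w\<close>
  multiplied together; it arises both from \<open>dA\<close> of the coefficient \<open>M (last (x # P1)) z\<close>
  and from \<open>mA\<close> on the longer path.\<close>

definition merged_path_term :: "int \<Rightarrow> 'x \<Rightarrow> 'f \<Rightarrow> 'x \<Rightarrow> nat \<Rightarrow> 'x list \<Rightarrow> 'x \<Rightarrow> 'x \<Rightarrow> 'x list \<Rightarrow> 'f" where
  "merged_path_term e x \<alpha> y L P1 w z P2 = (if last (z # P2) = y then zsgn e
     (\<nu> (Suc L) \<alpha> (map snd (path_entries ind M x P1) @ mA (M (last (x # P1)) w) (M w z) # map snd (path_entries ind M z P2)))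
     else 0)"

abbreviation dA_sign :: "int \<Rightarrow> 'x \<Rightarrow> nat \<Rightarrow> 'x list \<Rightarrow> 'x \<Rightarrow> 'x \<Rightarrow> 'x list \<Rightarrow> int" where
  "dA_sign p x L P1 w z P2 \<equiv> path_sign ind p x (P1 @ z # P2) + int L
     + (p + sum_list (map fst (path_entries ind M x P1))) + (int (ind (last (x # P1))) - int (ind w))"

abbreviation mA_sign :: "int \<Rightarrow> 'x \<Rightarrow> 'x list \<Rightarrow> 'x \<Rightarrow> 'x \<Rightarrow> 'x list \<Rightarrow> int" where
  "mA_sign p x P1 w z P2 \<equiv> path_sign ind p x (P1 @ w # z # P2) + int (length P1) + 1"

lemma dA_mA_sign_odd:
  assumes "length P2 = L - 1 - length P1" "length P1 < L"
  shows "odd (dA_sign p x L P1 w z P2 - mA_sign p x P1 w z P2)"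
proof -
  define u where "u = last (x # P1)"
  define d where "d = p + sum_list (map fst (path_entries ind M x P1))"
  define S where "S = path_sign ind p x P1"
  define Y where "Y = path_sign ind (d + int (ind u) - int (ind z) - 1) z P2"
  have h1: "path_sign ind p x (P1 @ z # P2) = S + (d + Y)"
    unfolding S_def Y_def d_def u_def path_sign_append[of ind p x P1 _ M] by simp
  have "d + int (ind u) - int (ind w) - 1 + int (ind w) - int (ind z) - 1 = (d + int (ind u) - int (ind z) - 1) + (- 1)"
    by simp
  then have h2a: "path_sign ind (d + int (ind u) - int (ind w) - 1 + int (ind w) - int (ind z) - 1) z P2
      = Y + (- 1) * int (length P2)"
    unfolding Y_def by (simp only: path_sign_shift)
  have h2: "path_sign ind p x (P1 @ w # z # P2) = S + (d + ((d + int (ind u) - int (ind w) - 1) + (Y + (- 1) * int (length P2))))"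
    unfolding S_def path_sign_append[of ind p x P1 _ M] d_def[symmetric] u_def[symmetric] path_sign.simps h2a[symmetric] ..
  have l2: "int (length P2) = int L - 1 - int (length P1)" using assms by simp
  show ?thesis
    unfolding u_def[symmetric] d_def[symmetric] h1 h2 l2 by simp
qed

lemma merged_path_term_cancel:
  assumes "length P2 = L - 1 - length P1" "length P1 < L"
  shows "merged_path_term (dA_sign p x L P1 w z P2) x \<alpha> y L P1 w z P2
       = - merged_path_term (mA_sign p x P1 w z P2) x \<alpha> y L P1 w z P2"
proof (cases "last (z # P2) = y")
  case True
  show ?thesis
    unfolding merged_path_term_def if_P[OF True] by (rule zsgn_odd[OF dA_mA_sign_odd[OF assms]])
qed (simp add: merged_path_term_def)

lemma dA_term_path_expand:
  assumes lP1: "length P1 = a" and x: "x \<in> C" and P1: "set P1 \<subseteq> C" and z: "z \<in> C"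
  shows "dA_term dA \<nu> L p \<alpha> (path_entries ind M x (P1 @ z # P2)) a
    = (\<Sum>w\<in>C. zsgn (int L) (zsgn (p + sum_list (map fst (path_entries ind M x P1))) (zsgn (int (ind (last (x # P1))) - int (ind w))
        (\<nu> (Suc L) \<alpha> (map snd (path_entries ind M x P1) @ mA (M (last (x # P1)) w) (M w z) # map snd (path_entries ind M z P2))))))"
  unfolding dA_term_def path_entries_split1[OF lP1] entry_def snd_conv
    twisting_cocycle_diff[OF cocycle last_in_path[OF x P1] z] append_Cons append_Nil
  by (simp only: nu_slot_sum nu_slot_zsgn zsgn_sum)

lemma dA_path_total_expand:
  assumes x: "x \<in> C"
  shows "dA_path_total p x \<alpha> y L = (\<Sum>a<L. \<Sum>P1\<in>paths a C. \<Sum>z\<in>C. \<Sum>P2\<in>paths (L - 1 - a) C. \<Sum>w\<in>C.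
           merged_path_term (dA_sign p x L P1 w z P2) x \<alpha> y L P1 w z P2)"
proof -
  have "dA_path_total p x \<alpha> y L = (\<Sum>a<L. \<Sum>P\<in>paths L C. if last (x # P) = y
      then zsgn (path_sign ind p x P) (dA_term dA \<nu> L p \<alpha> (path_entries ind M x P) a) else 0)"
    unfolding dA_path_total_def zsgn_sum by (subst sum.swap) (auto intro!: sum.cong)
  also have "\<dots> = (\<Sum>a<L. \<Sum>P1\<in>paths a C. \<Sum>z\<in>C. \<Sum>P2\<in>paths (L - 1 - a) C. if last (x # P1 @ z # P2) = y
      then zsgn (path_sign ind p x (P1 @ z # P2)) (dA_term dA \<nu> L p \<alpha> (path_entries ind M x (P1 @ z # P2)) a) else 0)"
    by (rule sum.cong[OF refl], rule sum_paths_split) simp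
  also have "\<dots> = (\<Sum>a<L. \<Sum>P1\<in>paths a C. \<Sum>z\<in>C. \<Sum>P2\<in>paths (L - 1 - a) C. \<Sum>w\<in>C.
           merged_path_term (dA_sign p x L P1 w z P2) x \<alpha> y L P1 w z P2)"
  proof (intro sum.cong refl)
    fix a P1 z P2 assume P1: "P1 \<in> paths a C" and z: "z \<in> C"
    then have lP1: "length P1 = a" and sP1: "set P1 \<subseteq> C" by (auto simp: paths_def)
    show "(if last (x # P1 @ z # P2) = y
      then zsgn (path_sign ind p x (P1 @ z # P2)) (dA_term dA \<nu> L p \<alpha> (path_entries ind M x (P1 @ z # P2)) a) else 0)
       = (\<Sum>w\<in>C. merged_path_term (dA_sign p x L P1 w z P2) x \<alpha> y L P1 w z P2)"
      unfolding merged_path_term_def last_append_Cons dA_term_path_expand[OF lP1 x sP1 z] zsgn_sum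
      by (auto intro!: sum.cong simp: zsgn_exp_add[symmetric] add.assoc)
  qed
  finally show ?thesis .
qed

lemma mA_path_total_expand:
  "mA_path_total p x \<alpha> y (Suc L) = (\<Sum>a<L. \<Sum>P1\<in>paths a C. \<Sum>w\<in>C. \<Sum>z\<in>C. \<Sum>P2\<in>paths (L - 1 - a) C.
      merged_path_term (mA_sign p x P1 w z P2) x \<alpha> y L P1 w z P2)"
proof -
  have "mA_path_total p x \<alpha> y (Suc L) = (\<Sum>a<L. \<Sum>P\<in>paths (Suc L) C. if last (x # P) = y
      then zsgn (path_sign ind p x P) (mA_term mA \<nu> (Suc L) \<alpha> (path_entries ind M x P) a) else 0)"
    unfolding mA_path_total_def zsgn_sum diff_Suc_1 by (subst sum.swap) (auto intro!: sum.cong)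
  also have "\<dots> = (\<Sum>a<L. \<Sum>P1\<in>paths a C. \<Sum>w\<in>C. \<Sum>z\<in>C. \<Sum>P2\<in>paths (L - 1 - a) C.
      if last (x # P1 @ w # z # P2) = y then zsgn (path_sign ind p x (P1 @ w # z # P2))
        (mA_term mA \<nu> (Suc L) \<alpha> (path_entries ind M x (P1 @ w # z # P2)) a) else 0)"
    by (rule sum.cong[OF refl], subst sum_paths_split2[where L = "Suc L"]) auto
  also have "\<dots> = (\<Sum>a<L. \<Sum>P1\<in>paths a C. \<Sum>w\<in>C. \<Sum>z\<in>C. \<Sum>P2\<in>paths (L - 1 - a) C.
      merged_path_term (mA_sign p x P1 w z P2) x \<alpha> y L P1 w z P2)"
  proof (intro sum.cong refl)
    fix a P1 w z P2 assume P1: "P1 \<in> paths a C"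
    then have lP1: "length P1 = a" by (auto simp: paths_def)
    have "last (x # P1 @ w # z # P2) = last (z # P2)"
      using last_append_Cons[of x P1 w "z # P2"] by simp
    then show "(if last (x # P1 @ w # z # P2) = y then zsgn (path_sign ind p x (P1 @ w # z # P2))
        (mA_term mA \<nu> (Suc L) \<alpha> (path_entries ind M x (P1 @ w # z # P2)) a) else 0)
       = merged_path_term (mA_sign p x P1 w z P2) x \<alpha> y L P1 w z P2"
      unfolding merged_path_term_def mA_term_def path_entries_split2[OF lP1] entry_def lP1
      by (simp add: zsgn_exp_add[symmetric] add.assoc)
  qed
  finally show ?thesis .
qed

lemma dA_path_total_eq:
  assumes x: "x \<in> C"
  shows "dA_path_total p x \<alpha> y L = - mA_path_total p x \<alpha> y (Suc L)"
proof -
  have "dA_path_total p x \<alpha> y L = (\<Sum>a<L. \<Sum>P1\<in>paths a C. \<Sum>w\<in>C. \<Sum>z\<in>C. \<Sum>P2\<in>paths (L - 1 - a) C.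
          merged_path_term (dA_sign p x L P1 w z P2) x \<alpha> y L P1 w z P2)"
    unfolding dA_path_total_expand[OF x]
  proof (rule sum.cong[OF refl], rule sum.cong[OF refl])
    fix a P1
    have "(\<Sum>z\<in>C. \<Sum>P2\<in>paths (L - 1 - a) C. \<Sum>w\<in>C. merged_path_term (dA_sign p x L P1 w z P2) x \<alpha> y L P1 w z P2)
        = (\<Sum>z\<in>C. \<Sum>w\<in>C. \<Sum>P2\<in>paths (L - 1 - a) C. merged_path_term (dA_sign p x L P1 w z P2) x \<alpha> y L P1 w z P2)"
      by (intro sum.cong refl) (rule sum.swap)
    also have "\<dots> = (\<Sum>w\<in>C. \<Sum>z\<in>C. \<Sum>P2\<in>paths (L - 1 - a) C. merged_path_term (dA_sign p x L P1 w z P2) x \<alpha> y L P1 w z P2)"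
      by (rule sum.swap)
    finally show "(\<Sum>z\<in>C. \<Sum>P2\<in>paths (L - 1 - a) C. \<Sum>w\<in>C. merged_path_term (dA_sign p x L P1 w z P2) x \<alpha> y L P1 w z P2)
        = (\<Sum>w\<in>C. \<Sum>z\<in>C. \<Sum>P2\<in>paths (L - 1 - a) C. merged_path_term (dA_sign p x L P1 w z P2) x \<alpha> y L P1 w z P2)" .
  qed
  also have "\<dots> = (\<Sum>a<L. \<Sum>P1\<in>paths a C. \<Sum>w\<in>C. \<Sum>z\<in>C. \<Sum>P2\<in>paths (L - 1 - a) C.
          - merged_path_term (mA_sign p x P1 w z P2) x \<alpha> y L P1 w z P2)"
    by (intro sum.cong refl merged_path_term_cancel) (auto simp: paths_def)
  also have "\<dots> = - mA_path_total p x \<alpha> y (Suc L)"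
    unfolding mA_path_total_expand by (simp add: sum_negf)
  finally show ?thesis .
qed

lemma mA_path_total_long:
  assumes x: "x \<in> C" and B: "ind x < B"
  shows "mA_path_total p x \<alpha> y B = 0"
proof -
  obtain L where L: "B = Suc L" using B by (cases B) auto
  have "merged_path_term e x \<alpha> y L P1 w z P2 = 0"
    if "set P1 \<subseteq> C" "w \<in> C" "z \<in> C" "set P2 \<subseteq> C" "ind x < length P1 + 2 + length P2" for e P1 w z P2
  proof -
    have "0 \<in> set (map snd (path_entries ind M x (P1 @ w # z # P2)))"
      by (rule long_path_has_zero_entry[OF cocycle x]) (use that in auto)
    then have "0 \<in> set (map snd (path_entries ind M x P1)) \<or> M (last (x # P1)) w = 0 \<or> M w z = 0
        \<or> 0 \<in> set (map snd (path_entries ind M z P2))"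
      by (auto simp: path_entries_append entry_def)
    then have "0 \<in> set (map snd (path_entries ind M x P1) @ mA (M (last (x # P1)) w) (M w z) # map snd (path_entries ind M z P2))"
      by auto
    then show ?thesis
      by (simp add: merged_path_term_def nu_zero_entry)
  qed
  with B L show ?thesis
    unfolding mA_path_total_expand L by (intro sum.neutral ballI) (auto simp: paths_def)
qed

lemma path_totals_telescope:
  assumes x: "x \<in> C" and B: "ind x < B"
  shows "(\<Sum>L<B. dA_path_total p x \<alpha> y L + mA_path_total p x \<alpha> y L) = 0"
proof -
  have "(\<Sum>L<B. dA_path_total p x \<alpha> y L + mA_path_total p x \<alpha> y L)
      = (\<Sum>L<B. mA_path_total p x \<alpha> y L - mA_path_total p x \<alpha> y (Suc L))"
    by (simp add: dA_path_total_eq[OF x])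
  also have "\<dots> = mA_path_total p x \<alpha> y 0 - mA_path_total p x \<alpha> y B"
    by (rule sum_lessThan_telescope')
  moreover have "mA_path_total p x \<alpha> y 0 = 0"
    unfolding mA_path_total_def
    by (simp only: diff_0_eq_0 lessThan_0 sum.empty zsgn_zero if_cancel sum.neutral_const)
  ultimately show ?thesis
    by (simp add: mA_path_total_long[OF x B])
qed

text \<open>The differential of \<open>C\<^sub>*(X, M, \<F>)\<close> squares to zero, evaluated on \<open>\<alpha> \<otimes> x\<close>.\<close>

lemma path_sum_square_zero:
  assumes x: "x \<in> C" and \<alpha>: "Fh p \<alpha>" and B: "\<And>z. z \<in> C \<Longrightarrow> ind z < B"
  shows "(\<Sum>n<B. \<Sum>z\<in>C. \<Sum>n'<B. path_sum \<nu> C ind M n' [] (p + int (ind x) - int (ind z) - 1) z (path_sum \<nu> C ind M n [] p x \<alpha> z) y) = 0"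
proof -
  have "ainf_nu_nu_part \<nu> (Suc L) \<alpha> (path_entries ind M x P)
      = - ((\<Sum>a<L. dA_term dA \<nu> L p \<alpha> (path_entries ind M x P) a) + (\<Sum>a<L - 1. mA_term mA \<nu> L \<alpha> (path_entries ind M x P) a))"
    if "P \<in> paths L C" for L P
  proof -
    have "ainf_nu_nu_part \<nu> (Suc L) \<alpha> (path_entries ind M x P)
      + ((\<Sum>a<L. dA_term dA \<nu> L p \<alpha> (path_entries ind M x P) a) + (\<Sum>a<L - 1. mA_term mA \<nu> L \<alpha> (path_entries ind M x P) a)) = 0"
      using ainf_relation_dga[of "path_entries ind M x P" L p \<alpha>] that \<alpha> path_entries_homogeneous[OF cocycle x, of P]
      by (simp add: paths_def add.assoc)
    then show ?thesis
      by (simp only: eq_neg_iff_add_eq_0)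
  qed
  then have totals: "(\<Sum>P\<in>paths L C. if last (x # P) = y
      then zsgn (path_sign ind p x P) (ainf_nu_nu_part \<nu> (Suc L) \<alpha> (path_entries ind M x P)) else 0)
    = - (dA_path_total p x \<alpha> y L + mA_path_total p x \<alpha> y L)" for L
    unfolding dA_path_total_def mA_path_total_def sum.distrib[symmetric] sum_negf[symmetric]
    by (intro sum.cong refl) (simp add: zsgn_add zsgn_minus zsgn_diff)
  have "(\<Sum>n<B. \<Sum>z\<in>C. \<Sum>n'<B. path_sum \<nu> C ind M n' [] (p + int (ind x) - int (ind z) - 1) z (path_sum \<nu> C ind M n [] p x \<alpha> z) y)
      = (\<Sum>L<B. \<Sum>P\<in>paths L C. if last (x # P) = y
           then zsgn (path_sign ind p x P) (ainf_nu_nu_part \<nu> (Suc L) \<alpha> (path_entries ind M x P)) else 0)"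
    by (rule double_path_sum[OF x B])
  also have "\<dots> = - (\<Sum>L<B. dA_path_total p x \<alpha> y L + mA_path_total p x \<alpha> y L)"
    by (simp only: totals sum_negf)
  also have "\<dots> = 0"
    by (simp add: path_totals_telescope[OF x B[OF x]])
  finally show ?thesis .
qed

end

section \<open>The mapping cone of \<open>\<tau>\<close>\<close>

definition twisting_morphism :: "(int \<Rightarrow> 'a::ab_group_add \<Rightarrow> bool) \<Rightarrow> ('a \<Rightarrow> 'a) \<Rightarrow> ('a \<Rightarrow> 'a \<Rightarrow> 'a)
     \<Rightarrow> 'x set \<Rightarrow> ('x \<Rightarrow> nat) \<Rightarrow> ('x \<Rightarrow> 'x \<Rightarrow> 'a) \<Rightarrow> 'x set \<Rightarrow> ('x \<Rightarrow> nat) \<Rightarrow> ('x \<Rightarrow> 'x \<Rightarrow> 'a)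
     \<Rightarrow> ('x \<Rightarrow> 'x \<Rightarrow> 'a) \<Rightarrow> bool" where
  "twisting_morphism Ah dA mA C0 ind0 m0 C1 ind1 m1 \<tau> \<longleftrightarrow>
     (\<forall>x\<in>C0. \<forall>y\<in>C1. Ah (int (ind0 x) - int (ind1 y)) (\<tau> x y)
        \<and> dA (\<tau> x y) = (\<Sum>z\<in>C0. mA (m0 x z) (\<tau> z y))
                       - (\<Sum>w\<in>C1. zsgn (int (ind0 x) - int (ind1 w)) (mA (\<tau> x w) (m1 w y))))"

text \<open>The cone has critical points \<open>C0 \<squnion> C1\<close>, the indices of \<open>C0\<close> raised by one, and the block
  upper triangular cocycle \<open>[[m0, (-1)\<^sup>|\<^sup>x\<^sup>| \<tau>], [0, m1]]\<close>.\<close>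

definition cone_crit :: "'x set \<Rightarrow> 'x set \<Rightarrow> ('x + 'x) set" where
  "cone_crit C0 C1 = Inl ` C0 \<union> Inr ` C1"

definition cone_index :: "('x \<Rightarrow> nat) \<Rightarrow> ('x \<Rightarrow> nat) \<Rightarrow> 'x + 'x \<Rightarrow> nat" where
  "cone_index ind0 ind1 = case_sum (\<lambda>x. Suc (ind0 x)) ind1"

definition cone_cocycle :: "('x \<Rightarrow> nat) \<Rightarrow> ('x \<Rightarrow> 'x \<Rightarrow> 'a::ab_group_add) \<Rightarrow> ('x \<Rightarrow> 'x \<Rightarrow> 'a) \<Rightarrow> ('x \<Rightarrow> 'x \<Rightarrow> 'a)
     \<Rightarrow> 'x + 'x \<Rightarrow> 'x + 'x \<Rightarrow> 'a" where
  "cone_cocycle ind0 m0 m1 \<tau> a b = (case a of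
       Inl x \<Rightarrow> (case b of Inl z \<Rightarrow> m0 x z | Inr w \<Rightarrow> zsgn (int (ind0 x)) (\<tau> x w))
     | Inr w \<Rightarrow> (case b of Inl z \<Rightarrow> 0 | Inr y \<Rightarrow> m1 w y))"

lemma cone_index_simps [simp]:
  "cone_index ind0 ind1 (Inl x) = Suc (ind0 x)" "cone_index ind0 ind1 (Inr y) = ind1 y"
  by (auto simp: cone_index_def)

lemma cone_cocycle_simps [simp]:
  "cone_cocycle ind0 m0 m1 \<tau> (Inl x) (Inl z) = m0 x z"
  "cone_cocycle ind0 m0 m1 \<tau> (Inl x) (Inr w) = zsgn (int (ind0 x)) (\<tau> x w)"
  "cone_cocycle ind0 m0 m1 \<tau> (Inr w) (Inl z) = 0"
  "cone_cocycle ind0 m0 m1 \<tau> (Inr w) (Inr y) = m1 w y"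
  by (auto simp: cone_cocycle_def)

lemma finite_cone_crit [simp]: "finite C0 \<Longrightarrow> finite C1 \<Longrightarrow> finite (cone_crit C0 C1)"
  by (simp add: cone_crit_def)

lemma Inl_in_cone_crit [simp]: "Inl x \<in> cone_crit C0 C1 \<longleftrightarrow> x \<in> C0"
  and Inr_in_cone_crit [simp]: "Inr y \<in> cone_crit C0 C1 \<longleftrightarrow> y \<in> C1"
  by (auto simp: cone_crit_def)

lemma sum_cone_crit:
  assumes "finite C0" "finite C1"
  shows "(\<Sum>z\<in>cone_crit C0 C1. f z) = (\<Sum>x\<in>C0. f (Inl x)) + (\<Sum>w\<in>C1. f (Inr w))"
proof -
  have "(\<Sum>z\<in>cone_crit C0 C1. f z) = (\<Sum>z\<in>Inl ` C0. f z) + (\<Sum>z\<in>Inr ` C1. f z)"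
    unfolding cone_crit_def by (rule sum.union_disjoint) (use assms in auto)
  then show ?thesis by (simp add: sum.reindex)
qed

locale twisted_morphism = dga_module Ah dA mA Fh \<nu>
  for Ah :: "int \<Rightarrow> 'a::ab_group_add \<Rightarrow> bool" and dA and mA
    and Fh :: "int \<Rightarrow> 'f::ab_group_add \<Rightarrow> bool" and \<nu> +
  fixes C0 :: "'x set" and ind0 :: "'x \<Rightarrow> nat" and m0 :: "'x \<Rightarrow> 'x \<Rightarrow> 'a"
    and C1 :: "'x set" and ind1 :: "'x \<Rightarrow> nat" and m1 :: "'x \<Rightarrow> 'x \<Rightarrow> 'a"
    and \<tau> :: "'x \<Rightarrow> 'x \<Rightarrow> 'a"
  assumes cocycle0: "twisting_cocycle Ah dA mA C0 ind0 m0" and finite0: "finite C0"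
    and cocycle1: "twisting_cocycle Ah dA mA C1 ind1 m1" and finite1: "finite C1"
    and morphism: "twisting_morphism Ah dA mA C0 ind0 m0 C1 ind1 m1 \<tau>"
begin

lemma cone_twisting_cocycle:
  "twisting_cocycle Ah dA mA (cone_crit C0 C1) (cone_index ind0 ind1) (cone_cocycle ind0 m0 m1 \<tau>)"
  unfolding twisting_cocycle_def
proof (intro ballI)
  fix a b assume a: "a \<in> cone_crit C0 C1" and b: "b \<in> cone_crit C0 C1"
  let ?ind = "cone_index ind0 ind1" and ?M = "cone_cocycle ind0 m0 m1 \<tau>"
  show "Ah (int (?ind a) - int (?ind b) - 1) (?M a b)
      \<and> dA (?M a b) = (\<Sum>z\<in>cone_crit C0 C1. zsgn (int (?ind a) - int (?ind z)) (mA (?M a z) (?M z b)))"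
  proof (cases a; cases b)
    fix x y assume ab: "a = Inl x" "b = Inl y"
    with a b have "x \<in> C0" "y \<in> C0" by auto
    then show ?thesis unfolding ab sum_cone_crit[OF finite0 finite1]
      using twisting_cocycle_degree[OF cocycle0] twisting_cocycle_diff[OF cocycle0] by simp
  next
    fix x y assume ab: "a = Inl x" "b = Inr y"
    with a b have xy: "x \<in> C0" "y \<in> C1" by auto
    have s1: "zsgn (int (Suc (ind0 x)) - int (Suc (ind0 z))) (mA (m0 x z) (zsgn (int (ind0 z)) (\<tau> z y)))
       = zsgn (int (ind0 x)) (mA (m0 x z) (\<tau> z y))" for z
      by (simp add: mA_zsgn_right zsgn_exp_add[symmetric])
    have s2: "zsgn (int (Suc (ind0 x)) - int (ind1 w)) (mA (zsgn (int (ind0 x)) (\<tau> x w)) (m1 w y))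
       = - zsgn (int (ind0 x)) (zsgn (int (ind0 x) - int (ind1 w)) (mA (\<tau> x w) (m1 w y)))" for w
      by (simp add: mA_zsgn_left zsgn_exp_add[symmetric] zsgn_minus[symmetric] zsgn_1[symmetric]) (rule zsgn_cong; simp)
    show ?thesis
      unfolding ab sum_cone_crit[OF finite0 finite1] cone_index_simps cone_cocycle_simps s1 s2
      using morphism xy by (simp add: twisting_morphism_def Ah_zsgn dA_zsgn zsgn_diff zsgn_sum sum_negf)
  next
    fix x y assume ab: "a = Inr x" "b = Inl y"
    show ?thesis unfolding ab sum_cone_crit[OF finite0 finite1] by (simp add: Ah_0)
  next
    fix x y assume ab: "a = Inr x" "b = Inr y"
    with a b have "x \<in> C1" "y \<in> C1" by auto
    then show ?thesis unfolding ab sum_cone_crit[OF finite0 finite1]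
      using twisting_cocycle_degree[OF cocycle1] twisting_cocycle_diff[OF cocycle1] by simp
  qed
qed

sublocale tm0: twisted_module Ah dA mA Fh \<nu> C0 ind0 m0
  by (rule twisted_module.intro[OF dga_module_axioms]) (rule twisted_module_axioms.intro[OF cocycle0 finite0])

sublocale tm1: twisted_module Ah dA mA Fh \<nu> C1 ind1 m1
  by (rule twisted_module.intro[OF dga_module_axioms]) (rule twisted_module_axioms.intro[OF cocycle1 finite1])

sublocale cone: twisted_module Ah dA mA Fh \<nu> "cone_crit C0 C1" "cone_index ind0 ind1" "cone_cocycle ind0 m0 m1 \<tau>"
  by (rule twisted_module.intro[OF dga_module_axioms])
     (rule twisted_module_axioms.intro[OF cone_twisting_cocycle finite_cone_crit[OF finite0 finite1]])

end

lemma int_Suc_diff_Suc: "(d::int) + int (Suc a) - int (Suc b) - 1 = d + int a - int b - 1"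
  by simp

lemma int_Suc_diff_one: "(d::int) + int (Suc a) - int b - 1 = d + int a - int b"
  by simp

context twisted_morphism
begin

abbreviation cone_path_sum :: "nat \<Rightarrow> 'a list \<Rightarrow> int \<Rightarrow> 'x + 'x \<Rightarrow> 'f \<Rightarrow> 'x + 'x \<Rightarrow> 'f" where
  "cone_path_sum \<equiv> path_sum \<nu> (cone_crit C0 C1) (cone_index ind0 ind1) (cone_cocycle ind0 m0 m1 \<tau>)"

text \<open>A path from \<open>Inl x\<close> to \<open>Inr y\<close> in the cone runs through \<open>C0\<close> along \<open>zs\<close>, crosses once by \<open>\<tau>\<close>
  to \<open>w\<close> and continues in \<open>C1\<close>.\<close>

definition tau_path_term :: "nat \<Rightarrow> 'a list \<Rightarrow> int \<Rightarrow> 'x \<Rightarrow> 'x list \<Rightarrow> 'x \<Rightarrow> 'f \<Rightarrow> 'x \<Rightarrow> 'f" where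
  "tau_path_term n pre d x zs w \<alpha> y =
     path_sum \<nu> C1 ind1 m1 n (pre @ map snd (path_entries ind0 m0 x zs) @ [\<tau> (last (x # zs)) w])
       (d + sum_list (map fst (path_entries ind0 m0 x zs)) + int (ind0 (last (x # zs))) - int (ind1 w)) w \<alpha> y"

definition mixed_path_sum :: "nat \<Rightarrow> 'a list \<Rightarrow> int \<Rightarrow> 'x \<Rightarrow> 'f \<Rightarrow> 'x \<Rightarrow> 'f" where
  "mixed_path_sum n pre d x \<alpha> y = (\<Sum>b<n. \<Sum>zs\<in>paths b C0. \<Sum>w\<in>C1.
     zsgn (int b + path_sign ind0 d x zs) (tau_path_term (n - 1 - b) pre d x zs w \<alpha> y))"

lemma tau_path_term_zero [simp]: "tau_path_term n pre d x zs w 0 y = 0"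
  by (simp add: tau_path_term_def)

lemma tau_path_term_Nil:
  "tau_path_term n pre d x [] w \<alpha> y = path_sum \<nu> C1 ind1 m1 n (pre @ [\<tau> x w]) (d + int (ind0 x) - int (ind1 w)) w \<alpha> y"
  by (simp add: tau_path_term_def)

lemma tau_path_term_Cons:
  "tau_path_term n pre d x (z # zs) w \<alpha> y
   = tau_path_term n (pre @ [m0 x z]) (d + int (ind0 x) - int (ind0 z) - 1) z zs w \<alpha> y"
  by (simp add: tau_path_term_def entry_def algebra_simps)

lemma mixed_path_sum_Suc:
  "mixed_path_sum (Suc n) pre d x \<alpha> y
   = (\<Sum>w\<in>C1. path_sum \<nu> C1 ind1 m1 n (pre @ [\<tau> x w]) (d + int (ind0 x) - int (ind1 w)) w \<alpha> y)
   + (\<Sum>z\<in>C0. zsgn (d + 1) (mixed_path_sum n (pre @ [m0 x z]) (d + int (ind0 x) - int (ind0 z) - 1) z \<alpha> y))"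
proof -
  have sign: "zsgn (int (Suc b) + (d + s)) v = zsgn (d + 1) (zsgn (int b + s) v)" for b s v
    by (simp add: zsgn_exp_add[symmetric]) (rule zsgn_cong; simp)
  have "(\<Sum>b<n. \<Sum>zs\<in>paths (Suc b) C0. \<Sum>w\<in>C1.
          zsgn (int (Suc b) + path_sign ind0 d x zs) (tau_path_term (Suc n - 1 - Suc b) pre d x zs w \<alpha> y))
      = (\<Sum>z\<in>C0. zsgn (d + 1) (mixed_path_sum n (pre @ [m0 x z]) (d + int (ind0 x) - int (ind0 z) - 1) z \<alpha> y))"
    unfolding mixed_path_sum_def zsgn_sum sum_paths_Suc path_sign.simps tau_path_term_Cons sign
    by (subst sum.swap) simp
  then show ?thesis
    unfolding mixed_path_sum_def sum.lessThan_Suc_shift by (simp add: tau_path_term_Nil)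
qed

lemma cone_path_sum_Inr_Inl: "cone_path_sum n pre d (Inr w) \<alpha> (Inl y) = 0"
proof (induction n arbitrary: pre d w)
  case (Suc n)
  show ?case
    unfolding path_sum_Suc sum_cone_crit[OF finite0 finite1] by (simp add: path_sum_prefix_zero Suc)
qed (simp add: path_sum_0)

lemma cone_path_sum_Inr_Inr: "cone_path_sum n pre d (Inr w) \<alpha> (Inr y) = path_sum \<nu> C1 ind1 m1 n pre d w \<alpha> y"
proof (induction n arbitrary: pre d w)
  case (Suc n)
  show ?case
    unfolding path_sum_Suc sum_cone_crit[OF finite0 finite1] by (simp add: path_sum_prefix_zero Suc)
qed (simp add: path_sum_0)

lemma cone_path_sum_Inl_Inl: "cone_path_sum n pre d (Inl x) \<alpha> (Inl y) = path_sum \<nu> C0 ind0 m0 n pre d x \<alpha> y"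
proof (induction n arbitrary: pre d x)
  case (Suc n)
  show ?case
    unfolding path_sum_Suc sum_cone_crit[OF finite0 finite1]
    by (simp add: cone_path_sum_Inr_Inl Suc int_Suc_diff_Suc del: of_nat_Suc)
qed (simp add: path_sum_0)

lemma cone_path_sum_Inl_Inr:
  "cone_path_sum n pre d (Inl x) \<alpha> (Inr y) = zsgn (d + int (ind0 x)) (mixed_path_sum n pre d x \<alpha> y)"
proof (induction n arbitrary: pre d x)
  case 0
  then show ?case by (simp add: path_sum_0 mixed_path_sum_def)
next
  case (Suc n)
  have shift0: "zsgn d (zsgn (d + int (ind0 x) - int (ind0 z) - 1 + int (ind0 z)) v)
      = zsgn (d + int (ind0 x)) (zsgn (d + 1) v)" for z v
    by (simp add: zsgn_exp_add[symmetric]) (rule zsgn_cong; simp)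
  have shift1: "zsgn d (zsgn (int (ind0 x)) v) = zsgn (d + int (ind0 x)) v" for v
    by (simp add: zsgn_exp_add)
  have "cone_path_sum (Suc n) pre d (Inl x) \<alpha> (Inr y)
    = (\<Sum>z\<in>C0. zsgn d (cone_path_sum n (pre @ [m0 x z]) (d + int (ind0 x) - int (ind0 z) - 1) (Inl z) \<alpha> (Inr y)))
    + (\<Sum>w\<in>C1. zsgn d (cone_path_sum n (pre @ [zsgn (int (ind0 x)) (\<tau> x w)]) (d + int (ind0 x) - int (ind1 w)) (Inr w) \<alpha> (Inr y)))"
    by (simp only: path_sum_Suc sum_cone_crit[OF finite0 finite1] cone_index_simps cone_cocycle_simps int_Suc_diff_Suc)
       (simp only: int_Suc_diff_one)
  also have "\<dots> = (\<Sum>z\<in>C0. zsgn (d + int (ind0 x)) (zsgn (d + 1) (mixed_path_sum n (pre @ [m0 x z]) (d + int (ind0 x) - int (ind0 z) - 1) z \<alpha> y)))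
    + (\<Sum>w\<in>C1. zsgn (d + int (ind0 x)) (path_sum \<nu> C1 ind1 m1 n (pre @ [\<tau> x w]) (d + int (ind0 x) - int (ind1 w)) w \<alpha> y))"
    by (simp only: Suc cone_path_sum_Inr_Inr path_sum_prefix_zsgn shift0 shift1)
  also have "\<dots> = zsgn (d + int (ind0 x)) (mixed_path_sum (Suc n) pre d x \<alpha> y)"
    by (simp only: mixed_path_sum_Suc zsgn_add zsgn_sum) (rule add.commute)
  finally show ?case .
qed

end

section \<open>\<open>\<Psi>\<close> is the off-diagonal block of the cone differential\<close>

lemma sum_product4:
  fixes f :: "_ \<Rightarrow> 'r::comm_monoid_add"
  shows "(\<Sum>i\<in>((A \<times> B) \<times> C) \<times> D. f i) = (\<Sum>a\<in>A. \<Sum>b\<in>B. \<Sum>c\<in>C. \<Sum>d\<in>D. f (((a, b), c), d))"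
proof -
  have pair: "(\<Sum>a\<in>A. \<Sum>b\<in>B. g (a, b)) = (\<Sum>i\<in>A \<times> B. g i)" for A B and g :: "_ \<Rightarrow> 'r"
    by (simp add: sum.cartesian_product)
  show ?thesis
    by (simp only: pair[symmetric])
qed

context twisted_morphism
begin

text \<open>The word \<open>\<alpha> \<otimes> (path in C0) \<otimes> \<tau> \<otimes> (path in C1)\<close> that \<open>m\<^sub>1\<^sup>~\<^sup>k \<tau>\<^sup>~ m\<^sub>0\<^sup>~\<^sup>j\<close> produces from \<open>\<alpha> \<otimes> x\<close>,
  and the exponent of the sign it picks up.\<close>

definition tau_word :: "int \<Rightarrow> 'f \<Rightarrow> 'x \<Rightarrow> 'x list \<Rightarrow> 'x \<Rightarrow> 'x list \<Rightarrow> ('f, 'a, 'x) tword" where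
  "tau_word p \<alpha> x zs0 w zs1 = ((p, \<alpha>), path_entries ind0 m0 x zs0
     @ (int (ind0 (last (x # zs0))) - int (ind1 w), \<tau> (last (x # zs0)) w) # path_entries ind1 m1 w zs1, last (w # zs1))"

definition tau_word_sign :: "int \<Rightarrow> 'x \<Rightarrow> 'x list \<Rightarrow> 'x \<Rightarrow> 'x list \<Rightarrow> int" where
  "tau_word_sign p x zs0 w zs1 = path_sign ind0 p x zs0
     + path_sign ind1 (p + sum_list (map fst (path_entries ind0 m0 x zs0)) + (int (ind0 (last (x # zs0))) - int (ind1 w))) w zs1"

lemma eval_word_tau_word:
  assumes "length zs0 = u - 1" "length zs1 = n - u" "1 \<le> u" "u \<le> n"
  shows "eval_word \<nu> n (ksign (tau_word_sign p x zs0 w zs1)) (tau_word p \<alpha> x zs0 w zs1) y q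
    = (if p = q + int (ind1 y) - int (ind0 x) then zsgn (path_sign ind0 p x zs0) (if last (w # zs1) = y
         then zsgn (path_sign ind1 (p + sum_list (map fst (path_entries ind0 m0 x zs0)) + int (ind0 (last (x # zs0))) - int (ind1 w)) w zs1)
           (\<nu> (length (map snd (path_entries ind0 m0 x zs0) @ [\<tau> (last (x # zs0)) w]) + (n - u) + 1) \<alpha>
              ((map snd (path_entries ind0 m0 x zs0) @ [\<tau> (last (x # zs0)) w]) @ map snd (path_entries ind1 m1 w zs1)))
         else 0) else 0)"
proof (cases "last (w # zs1) = y")
  case True
  have "word_degree (tau_word p \<alpha> x zs0 w zs1) + int n - 1 = q \<longleftrightarrow> p = q + int (ind1 y) - int (ind0 x)"
    using assms True by (auto simp: tau_word_def word_degree_def path_degree of_nat_diff)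
  then show ?thesis
    unfolding eval_word_def
    using True assms by (simp add: tau_word_def tau_word_sign_def word_end_def zmul_ksign zsgn_exp_add add_diff_eq)
qed (simp add: eval_word_def tau_word_def word_end_def)

lemma sum_eval_tau_words:
  assumes zs0: "zs0 \<in> paths (u - 1) C0" and u: "1 \<le> u" "u \<le> n"
  shows "(\<Sum>zs1\<in>paths (n - u) C1. eval_word \<nu> n (ksign (tau_word_sign p x zs0 w zs1)) (tau_word p \<alpha> x zs0 w zs1) y q)
    = (if p = q + int (ind1 y) - int (ind0 x) then zsgn (path_sign ind0 p x zs0) (tau_path_term (n - u) [] p x zs0 w \<alpha> y) else 0)"
proof -
  have word: "zs1 \<in> paths (n - u) C1 \<Longrightarrow> eval_word \<nu> n (ksign (tau_word_sign p x zs0 w zs1)) (tau_word p \<alpha> x zs0 w zs1) y q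
    = (if p = q + int (ind1 y) - int (ind0 x) then zsgn (path_sign ind0 p x zs0) (if last (w # zs1) = y
         then zsgn (path_sign ind1 (p + sum_list (map fst (path_entries ind0 m0 x zs0)) + int (ind0 (last (x # zs0))) - int (ind1 w)) w zs1)
           (\<nu> (length (map snd (path_entries ind0 m0 x zs0) @ [\<tau> (last (x # zs0)) w]) + (n - u) + 1) \<alpha>
              ((map snd (path_entries ind0 m0 x zs0) @ [\<tau> (last (x # zs0)) w]) @ map snd (path_entries ind1 m1 w zs1)))
         else 0) else 0)" for zs1
    by (rule eval_word_tau_word) (use zs0 u in \<open>auto simp: paths_def\<close>)
  show ?thesis
    unfolding tau_path_term_def path_sum_def zsgn_sum append_Nil
    by (simp only: word cong: sum.cong) (cases "p = q + int (ind1 y) - int (ind0 x)"; simp)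
qed

lemma evalnu_Psi_term:
  fixes c :: "'x \<Rightarrow> int \<Rightarrow> 'f"
  assumes c: "cchain C0 Fh c" and u: "1 \<le> u" "u \<le> n"
  shows "evalnu \<nu> n ((lext (mtil C1 ind1 m1) ^^ (n - u)) (lext (tautil C1 ind0 ind1 \<tau>)
            ((lext (mtil C0 ind0 m0) ^^ (u - 1)) (emb C0 c :: ('f, 'a, 'x) tword \<Rightarrow> int)))) y q
    = (\<Sum>x\<in>C0. \<Sum>zs\<in>paths (u - 1) C0. \<Sum>w\<in>C1. zsgn (path_sign ind0 (q + int (ind1 y) - int (ind0 x)) x zs)
         (tau_path_term (n - u) [] (q + int (ind1 y) - int (ind0 x)) x zs w (c x (q + int (ind1 y) - int (ind0 x))) y))"
proof -
  let ?g = "\<lambda>x. q + int (ind1 y) - int (ind0 x)"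
  let ?F = "\<lambda>x p. \<Sum>zs\<in>paths (u - 1) C0. \<Sum>w\<in>C1. zsgn (path_sign ind0 p x zs) (tau_path_term (n - u) [] p x zs w (c x p) y)"
  have "evalnu \<nu> n ((lext (mtil C1 ind1 m1) ^^ (n - u)) (lext (tautil C1 ind0 ind1 \<tau>)
            ((lext (mtil C0 ind0 m0) ^^ (u - 1)) (emb C0 c :: ('f, 'a, 'x) tword \<Rightarrow> int)))) y q
     = (\<Sum>i\<in>((support c \<times> paths (u - 1) C0) \<times> C1) \<times> paths (n - u) C1. case i of ((((x, p), zs0), w), zs1) \<Rightarrow>
          eval_word \<nu> n (ksign (tau_word_sign p x zs0 w zs1)) (tau_word p (c x p) x zs0 w zs1) y q)"
    by (simp add: emb_eq_formal_sum cchainD[OF c] lext_mtil_power finite0 finite1 lext_tautil_formal_sum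
        evalnu_formal_sum split_def word_degree_def word_end_def extend_word_def tau_extend_def ksign_add add.assoc
        tau_word_def tau_word_sign_def)
  also have "\<dots> = (\<Sum>(x, p)\<in>support c. if p = ?g x then ?F x p else 0)"
    unfolding sum_product4
    by (intro sum.cong refl, clarify) (cases "p = ?g x"; simp add: sum_eval_tau_words[OF _ u] cong: sum.cong)
  also have "\<dots> = (\<Sum>x\<in>C0. ?F x (?g x))"
    by (rule sum_pairs_on_graph) (use finite0 cchainD[OF c] in \<open>auto simp: support_def\<close>)
  finally show ?thesis .
qed

end

lemma sum_reorder4:
  "(\<Sum>a\<in>A. \<Sum>b\<in>B. \<Sum>c\<in>C. \<Sum>d\<in>D. f a b c d) = (\<Sum>d\<in>D. \<Sum>b\<in>B. \<Sum>c\<in>C. \<Sum>a\<in>A. f a b c d)"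
proof -
  have "(\<Sum>a\<in>A. \<Sum>b\<in>B. \<Sum>c\<in>C. \<Sum>d\<in>D. f a b c d) = (\<Sum>b\<in>B. \<Sum>c\<in>C. \<Sum>d\<in>D. \<Sum>a\<in>A. f a b c d)"
    by (subst sum.swap, intro sum.cong refl, subst sum.swap, intro sum.cong refl, subst sum.swap) simp
  also have "\<dots> = (\<Sum>d\<in>D. \<Sum>b\<in>B. \<Sum>c\<in>C. \<Sum>a\<in>A. f a b c d)"
    by (subst (2) sum.swap, subst sum.swap) simp
  finally show ?thesis .
qed

context twisted_morphism
begin

definition index_bound :: nat where
  "index_bound = Suc (Suc (sum ind0 C0 + sum ind1 C1))"

lemma index_bound0: "x \<in> C0 \<Longrightarrow> Suc (ind0 x) < index_bound"
  using member_le_sum[of x C0 ind0] finite0 unfolding index_bound_def by simp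

lemma index_bound1: "w \<in> C1 \<Longrightarrow> ind1 w < index_bound"
  using member_le_sum[of w C1 ind1] finite1 unfolding index_bound_def by simp

lemma Psi_summand:
  fixes c :: "'x \<Rightarrow> int \<Rightarrow> 'f"
  assumes c: "cchain C0 Fh c"
  shows "(if 1 \<le> n then (\<Sum>u\<in>{1..n}. zsgn (int u - 1) (evalnu \<nu> n ((lext (mtil C1 ind1 m1) ^^ (n - u))
            (lext (tautil C1 ind0 ind1 \<tau>) ((lext (mtil C0 ind0 m0) ^^ (u - 1)) (emb C0 c :: ('f, 'a, 'x) tword \<Rightarrow> int)))) y q))
          else 0)
    = (\<Sum>x\<in>C0. zsgn (q + int (ind1 y)) (cone_path_sum n [] (q + int (ind1 y) - int (ind0 x)) (Inl x)
          (c x (q + int (ind1 y) - int (ind0 x))) (Inr y)))"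
proof (cases "1 \<le> n")
  case True
  let ?p = "\<lambda>x. q + int (ind1 y) - int (ind0 x)"
  have "(\<Sum>u\<in>{1..n}. zsgn (int u - 1) (evalnu \<nu> n ((lext (mtil C1 ind1 m1) ^^ (n - u))
            (lext (tautil C1 ind0 ind1 \<tau>) ((lext (mtil C0 ind0 m0) ^^ (u - 1)) (emb C0 c :: ('f, 'a, 'x) tword \<Rightarrow> int)))) y q))
      = (\<Sum>b<n. zsgn (int b) (\<Sum>x\<in>C0. \<Sum>zs\<in>paths b C0. \<Sum>w\<in>C1.
           zsgn (path_sign ind0 (?p x) x zs) (tau_path_term (n - 1 - b) [] (?p x) x zs w (c x (?p x)) y)))"
    unfolding One_nat_def sum.atLeast1_atMost_eq
    by (intro sum.cong refl, subst evalnu_Psi_term[OF c, unfolded One_nat_def]) auto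
  also have "\<dots> = (\<Sum>x\<in>C0. mixed_path_sum n [] (?p x) x (c x (?p x)) y)"
    unfolding mixed_path_sum_def zsgn_sum zsgn_exp_add by (rule sum.swap)
  also have "\<dots> = (\<Sum>x\<in>C0. zsgn (q + int (ind1 y)) (cone_path_sum n [] (?p x) (Inl x) (c x (?p x)) (Inr y)))"
    by (simp add: cone_path_sum_Inl_Inr zsgn_zsgn)
  finally show ?thesis using True by simp
next
  case False
  then have "n = 0" by simp
  then show ?thesis by (simp add: path_sum_0)
qed

lemma Psi_eq_cone_path_sums:
  fixes c :: "'x \<Rightarrow> int \<Rightarrow> 'f"
  assumes c: "cchain C0 Fh c"
  shows "Psi C0 ind0 m0 C1 ind1 m1 \<tau> \<nu> c y q
    = (\<Sum>n<index_bound. \<Sum>x\<in>C0. zsgn (q + int (ind1 y)) (cone_path_sum n [] (q + int (ind1 y) - int (ind0 x)) (Inl x)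
          (c x (q + int (ind1 y) - int (ind0 x))) (Inr y)))"
proof -
  have "cone_path_sum n [] p (Inl x) \<alpha> (Inr y) = 0" if "x \<in> C0" "\<not> n < index_bound" for n x p \<alpha>
    using that index_bound0[OF that(1)] by (intro path_sum_long[OF cone_twisting_cocycle]) auto
  then show ?thesis
    unfolding Psi_def Psi_summand[OF c] by (intro Sum_any.expand_superset) (auto intro!: sum.neutral)
qed

lemma Psi_nonzero:
  fixes c :: "'x \<Rightarrow> int \<Rightarrow> 'f"
  assumes c: "cchain C0 Fh c" and nz: "Psi C0 ind0 m0 C1 ind1 m1 \<tau> \<nu> c y q \<noteq> 0"
  shows "y \<in> C1 \<and> (\<exists>x\<in>C0. c x (q + int (ind1 y) - int (ind0 x)) \<noteq> 0)"
proof (rule ccontr)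
  assume "\<not> ?thesis"
  then have "cone_path_sum n [] (q + int (ind1 y) - int (ind0 x)) (Inl x) (c x (q + int (ind1 y) - int (ind0 x))) (Inr y) = 0"
    if "x \<in> C0" for n x
    using that path_sum_outside[of "Inl x" "cone_crit C0 C1" "Inr y"] by auto
  with nz show False
    using Psi_eq_cone_path_sums[OF c, of y q] by simp
qed

lemma Psi_cchain:
  fixes c :: "'x \<Rightarrow> int \<Rightarrow> 'f"
  assumes c: "cchain C0 Fh c"
  shows "cchain C1 Fh (Psi C0 ind0 m0 C1 ind1 m1 \<tau> \<nu> c)"
proof (rule cchain_shifted_support[OF c finite1])
  fix y q
  show "y \<in> C1 \<and> (\<exists>x\<in>C0. c x (q + (int (ind1 y) - int (ind0 x))) \<noteq> 0)"
    if "Psi C0 ind0 m0 C1 ind1 m1 \<tau> \<nu> c y q \<noteq> 0"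
    using Psi_nonzero[OF c that] by (simp add: add_diff_eq)
  have "Fh (q + int (ind1 y) - int (ind0 x) + int (cone_index ind0 ind1 (Inl x)) - int (cone_index ind0 ind1 (Inr y)) - 1)
      (cone_path_sum n [] (q + int (ind1 y) - int (ind0 x)) (Inl x) (c x (q + int (ind1 y) - int (ind0 x))) (Inr y))"
    if "x \<in> C0" for n x
    by (rule path_sum_degree[OF cone_twisting_cocycle]) (use that cchainD(3)[OF c] in auto)
  then show "Fh q (Psi C0 ind0 m0 C1 ind1 m1 \<tau> \<nu> c y q)"
    using Psi_eq_cone_path_sums[OF c, of y q] by (simp add: Fh_sum Fh_zsgn)
qed

lemma Psi_total_degree:
  fixes c :: "'x \<Rightarrow> int \<Rightarrow> 'f"
  assumes c: "cchain C0 Fh c" and k: "\<And>x p. c x p \<noteq> 0 \<Longrightarrow> p + int (ind0 x) = k"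
    and nz: "Psi C0 ind0 m0 C1 ind1 m1 \<tau> \<nu> c y q \<noteq> 0"
  shows "q + int (ind1 y) = k"
  using Psi_nonzero[OF c nz] k by force

text \<open>The summand of \<open>d\<^sub>c\<^sub>o\<^sub>n\<^sub>e \<circ> d\<^sub>c\<^sub>o\<^sub>n\<^sub>e\<close> on \<open>\<alpha> \<otimes> Inl x\<close> that passes through \<open>z\<close>.\<close>

definition composite_term :: "int \<Rightarrow> 'x \<Rightarrow> 'f \<Rightarrow> 'x + 'x \<Rightarrow> 'x + 'x \<Rightarrow> 'f" where
  "composite_term p x \<alpha> z y = (\<Sum>n<index_bound. \<Sum>n'<index_bound.
     cone_path_sum n' [] (p + int (Suc (ind0 x)) - int (cone_index ind0 ind1 z) - 1) z (cone_path_sum n [] p (Inl x) \<alpha> z) y)"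

lemma composite_terms_cancel:
  assumes x: "x \<in> C0" and \<alpha>: "Fh p \<alpha>"
  shows "(\<Sum>x'\<in>C0. composite_term p x \<alpha> (Inl x') y) + (\<Sum>w\<in>C1. composite_term p x \<alpha> (Inr w) y) = 0"
proof -
  have "z \<in> cone_crit C0 C1 \<Longrightarrow> cone_index ind0 ind1 z < index_bound" for z
    using index_bound0 index_bound1 by (auto simp: cone_crit_def)
  from cone.path_sum_square_zero[of "Inl x" p \<alpha> index_bound y, OF _ \<alpha> this] x
  have "(\<Sum>z\<in>cone_crit C0 C1. composite_term p x \<alpha> z y) = 0"
    unfolding composite_term_def by (subst sum.swap) simp
  then show ?thesis
    by (simp add: sum_cone_crit[OF finite0 finite1])
qed

lemma Psi_morse_diff_expand:
  fixes c :: "'x \<Rightarrow> int \<Rightarrow> 'f" and y :: 'x and q :: int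
  assumes c: "cchain C0 Fh c"
  defines "K \<equiv> q + int (ind1 y)"
  shows "Psi C0 ind0 m0 C1 ind1 m1 \<tau> \<nu> (morse_diff C0 ind0 m0 \<nu> c) y q
       = zsgn K (\<Sum>x\<in>C0. \<Sum>x'\<in>C0. composite_term (K + 1 - int (ind0 x)) x (c x (K + 1 - int (ind0 x))) (Inl x') (Inr y))"
proof -
  let ?B = index_bound and ?P = "\<lambda>x. K + 1 - int (ind0 x)"
  have d0: "morse_diff C0 ind0 m0 \<nu> c x' (K - int (ind0 x'))
      = (\<Sum>n<?B. \<Sum>x\<in>C0. cone_path_sum n [] (?P x) (Inl x) (c x (?P x)) (Inl x'))" for x'
    using tm0.morse_diff_eq_path_sums[OF c, of ?B x' "K - int (ind0 x')"] index_bound0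
    by (simp add: cone_path_sum_Inl_Inl Suc_lessD)
  have "Psi C0 ind0 m0 C1 ind1 m1 \<tau> \<nu> (morse_diff C0 ind0 m0 \<nu> c) y q
      = (\<Sum>n'<?B. \<Sum>x'\<in>C0. zsgn K (cone_path_sum n' [] (K - int (ind0 x')) (Inl x')
           (\<Sum>n<?B. \<Sum>x\<in>C0. cone_path_sum n [] (?P x) (Inl x) (c x (?P x)) (Inl x')) (Inr y)))"
    using Psi_eq_cone_path_sums[OF tm0.morse_diff_cchain[OF c], of y q] unfolding K_def[symmetric]
    by (simp only: d0)
  also have "\<dots> = zsgn K (\<Sum>x\<in>C0. \<Sum>x'\<in>C0. \<Sum>n<?B. \<Sum>n'<?B.
      cone_path_sum n' [] (K - int (ind0 x')) (Inl x') (cone_path_sum n [] (?P x) (Inl x) (c x (?P x)) (Inl x')) (Inr y))"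
    by (simp only: path_sum_sum zsgn_sum) (rule sum_reorder4)
  also have "\<dots> = zsgn K (\<Sum>x\<in>C0. \<Sum>x'\<in>C0. composite_term (?P x) x (c x (?P x)) (Inl x') (Inr y))"
  proof -
    have "?P x + int (Suc (ind0 x)) - int (cone_index ind0 ind1 (Inl x')) - 1 = K - int (ind0 x')" for x x'
      by simp
    then show ?thesis
      unfolding composite_term_def by (simp only:)
  qed
  finally show ?thesis .
qed

lemma morse_diff_Psi_expand:
  fixes c :: "'x \<Rightarrow> int \<Rightarrow> 'f" and y :: 'x and q :: int
  assumes c: "cchain C0 Fh c"
  defines "K \<equiv> q + int (ind1 y)"
  shows "morse_diff C1 ind1 m1 \<nu> (Psi C0 ind0 m0 C1 ind1 m1 \<tau> \<nu> c) y q
       = zsgn (K + 1) (\<Sum>x\<in>C0. \<Sum>w\<in>C1. composite_term (K + 1 - int (ind0 x)) x (c x (K + 1 - int (ind0 x))) (Inr w) (Inr y))"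
proof -
  let ?B = index_bound and ?P = "\<lambda>x. K + 1 - int (ind0 x)"
  have Psi: "Psi C0 ind0 m0 C1 ind1 m1 \<tau> \<nu> c w (K + 1 - int (ind1 w))
      = (\<Sum>n<?B. \<Sum>x\<in>C0. zsgn (K + 1) (cone_path_sum n [] (?P x) (Inl x) (c x (?P x)) (Inr w)))" for w
    using Psi_eq_cone_path_sums[OF c, of w "K + 1 - int (ind1 w)"] by simp
  have "morse_diff C1 ind1 m1 \<nu> (Psi C0 ind0 m0 C1 ind1 m1 \<tau> \<nu> c) y q
      = (\<Sum>n'<?B. \<Sum>w\<in>C1. cone_path_sum n' [] (K + 1 - int (ind1 w)) (Inr w)
           (\<Sum>n<?B. \<Sum>x\<in>C0. zsgn (K + 1) (cone_path_sum n [] (?P x) (Inl x) (c x (?P x)) (Inr w))) (Inr y))"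
  proof -
    have "morse_diff C1 ind1 m1 \<nu> (Psi C0 ind0 m0 C1 ind1 m1 \<tau> \<nu> c) y q
        = (\<Sum>n'<?B. \<Sum>w\<in>C1. path_sum \<nu> C1 ind1 m1 n' [] (K + 1 - int (ind1 w)) w
             (Psi C0 ind0 m0 C1 ind1 m1 \<tau> \<nu> c w (K + 1 - int (ind1 w))) y)"
      using tm1.morse_diff_eq_path_sums[OF Psi_cchain[OF c], of ?B y q] index_bound1 by (simp only: K_def)
    then show ?thesis
      by (simp only: Psi cone_path_sum_Inr_Inr)
  qed
  also have "\<dots> = zsgn (K + 1) (\<Sum>x\<in>C0. \<Sum>w\<in>C1. \<Sum>n<?B. \<Sum>n'<?B.
      cone_path_sum n' [] (K + 1 - int (ind1 w)) (Inr w) (cone_path_sum n [] (?P x) (Inl x) (c x (?P x)) (Inr w)) (Inr y))"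
    by (simp only: path_sum_sum path_sum_zsgn zsgn_sum) (rule sum_reorder4)
  also have "\<dots> = zsgn (K + 1) (\<Sum>x\<in>C0. \<Sum>w\<in>C1. composite_term (?P x) x (c x (?P x)) (Inr w) (Inr y))"
  proof -
    have "?P x + int (Suc (ind0 x)) - int (cone_index ind0 ind1 (Inr w)) - 1 = K + 1 - int (ind1 w)" for x w
      by simp
    then show ?thesis
      unfolding composite_term_def by (simp only:)
  qed
  finally show ?thesis .
qed

lemma Psi_morse_diff:
  fixes c :: "'x \<Rightarrow> int \<Rightarrow> 'f"
  assumes c: "cchain C0 Fh c"
  shows "Psi C0 ind0 m0 C1 ind1 m1 \<tau> \<nu> (morse_diff C0 ind0 m0 \<nu> c) = morse_diff C1 ind1 m1 \<nu> (Psi C0 ind0 m0 C1 ind1 m1 \<tau> \<nu> c)"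
proof (intro ext)
  fix y q
  define K where "K = q + int (ind1 y)"
  let ?P = "\<lambda>x. K + 1 - int (ind0 x)"
  have "(\<Sum>x\<in>C0. \<Sum>x'\<in>C0. composite_term (?P x) x (c x (?P x)) (Inl x') (Inr y))
      = - (\<Sum>x\<in>C0. \<Sum>w\<in>C1. composite_term (?P x) x (c x (?P x)) (Inr w) (Inr y))"
  proof -
    have "(\<Sum>x'\<in>C0. composite_term (?P x) x (c x (?P x)) (Inl x') (Inr y))
        = - (\<Sum>w\<in>C1. composite_term (?P x) x (c x (?P x)) (Inr w) (Inr y))" if "x \<in> C0" for x
      using composite_terms_cancel[OF that cchainD(3)[OF c]] by (simp add: eq_neg_iff_add_eq_0)
    then show ?thesis
      by (simp add: sum_negf[symmetric] cong: sum.cong)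
  qed
  then show "Psi C0 ind0 m0 C1 ind1 m1 \<tau> \<nu> (morse_diff C0 ind0 m0 \<nu> c) y q = morse_diff C1 ind1 m1 \<nu> (Psi C0 ind0 m0 C1 ind1 m1 \<tau> \<nu> c) y q"
    unfolding Psi_morse_diff_expand[OF c] morse_diff_Psi_expand[OF c] K_def[symmetric]
    by (simp add: zsgn_exp_add zsgn_1 zsgn_minus)
qed

end

theorem proposition4p9:
  fixes Ah :: "int \<Rightarrow> 'a::ab_group_add \<Rightarrow> bool" and dA :: "'a \<Rightarrow> 'a" and mA :: "'a \<Rightarrow> 'a \<Rightarrow> 'a"
    and Fh :: "int \<Rightarrow> 'f::ab_group_add \<Rightarrow> bool" and \<nu> :: "nat \<Rightarrow> 'f \<Rightarrow> 'a list \<Rightarrow> 'f"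
    and C0 C1 :: "'x set" and ind0 ind1 :: "'x \<Rightarrow> nat"
    and m0 m1 \<tau> :: "'x \<Rightarrow> 'x \<Rightarrow> 'a"
  assumes A: "cubical_dga Ah dA mA"
    and fin0: "finite C0" and fin1: "finite C1"
    and m0: "twisting_cocycle Ah dA mA C0 ind0 m0"
    and m1: "twisting_cocycle Ah dA mA C1 ind1 m1"
    and tau: "\<forall>x\<in>C0. \<forall>y\<in>C1. Ah (int (ind0 x) - int (ind1 y)) (\<tau> x y)
               \<and> dA (\<tau> x y) = (\<Sum>z\<in>C0. mA (m0 x z) (\<tau> z y))
                   - (\<Sum>w\<in>C1. zsgn (int (ind0 x) - int (ind1 w)) (mA (\<tau> x w) (m1 w y)))"
    and F: "ainf_module Ah dA mA Fh \<nu>"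
  shows "\<forall>c. cchain C0 Fh c \<longrightarrow>
            cchain C1 Fh (Psi C0 ind0 m0 C1 ind1 m1 \<tau> \<nu> c)
          \<and> (\<forall>k. (\<forall>x p. c x p \<noteq> 0 \<longrightarrow> p + int (ind0 x) = k) \<longrightarrow>
                 (\<forall>y q. Psi C0 ind0 m0 C1 ind1 m1 \<tau> \<nu> c y q \<noteq> 0 \<longrightarrow> q + int (ind1 y) = k))
          \<and> Psi C0 ind0 m0 C1 ind1 m1 \<tau> \<nu> (morse_diff C0 ind0 m0 \<nu> c)
            = morse_diff C1 ind1 m1 \<nu> (Psi C0 ind0 m0 C1 ind1 m1 \<tau> \<nu> c)"
proof -
  have "twisting_morphism Ah dA mA C0 ind0 m0 C1 ind1 m1 \<tau>"
    using tau unfolding twisting_morphism_def .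
  then interpret twisted_morphism Ah dA mA Fh \<nu> C0 ind0 m0 C1 ind1 m1 \<tau>
    using A F m0 m1 fin0 fin1 by (intro twisted_morphism.intro dga_module.intro twisted_morphism_axioms.intro)
  show ?thesis
    using Psi_cchain Psi_total_degree Psi_morse_diff by blast
qed

end
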